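(* Let $X$ be a real Hilbert space (finite- or infinite-dimensional) and let $\mathcal{C}$ be a nonempty finite collection of nonempty polyhedral subsets of $X$. Let $\lambda\in[0,2[$ and $x_0\in X$. Generate a sequence $(x_n)_{n\in\mathbb{N}}$ as follows: given $x_n$, pick any $R_n\in\mathcal{R}_{\mathcal{C},[0,\lambda]}$ (the choice may depend arbitrarily on $n$ and on the past) and set $x_{n+1}:=R_n x_n$. Then the sequence $(x_n)_{n\in\mathbb{N}}$ is bounded.
   Context: A subset $C$ of $X$ is polyhedral if it is of the form $C=\{x\in X : \langle a_i,x\rangle\le\beta_i \text{ for all } i\in I\}$ for some finite index set $I$, vectors $a_i\in X\setminus\{0\}$ and reals $\beta_i$ (i.e. an intersection of finitely many closed halfspaces). For a nonempty closed convex set $C$, $P_C$ is the orthogonal (nearest-point) projector onto $C$, and $\mathrm{Id}$ is the identity on $X$. For a finite collection $\mathcal{C}$ of nonempty closed convex sets and an interval $\Lambda\subseteq[0,2]$, the set of relaxed projectors is \[ \mathcal{R}_{\mathcal{C},\Lambda}:=\{(1-\mu)\mathrm{Id}+\mu P_C : C\in\mathcal{C},\ \mu\in\Lambda\}. \] *)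

theory Defs
  imports "HOL-Analysis.Analysis"
begin

definition polyhedral :: "'a::real_inner set \<Rightarrow> bool" where
  "polyhedral C \<longleftrightarrow> (\<exists>(I::nat set) (a::nat \<Rightarrow> 'a) (\<beta>::nat \<Rightarrow> real).
      finite I \<and> (\<forall>i\<in>I. a i \<noteq> 0) \<and> C = {x. \<forall>i\<in>I. inner (a i) x \<le> \<beta> i})"

text \<open>Orthogonal (nearest-point) projector onto C; the nearest point is unique
  for nonempty closed convex C in a real Hilbert space.\<close>
definition proj :: "'a::real_inner set \<Rightarrow> 'a \<Rightarrow> 'a" where
  "proj C x = (THE p. p \<in> C \<and> (\<forall>y\<in>C. dist x p \<le> dist x y))"

definition relaxed_projectors :: "'a::real_inner set set \<Rightarrow> real set \<Rightarrow> ('a \<Rightarrow> 'a) set" where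
  "relaxed_projectors Cs \<Lambda> =
     {R. \<exists>C\<in>Cs. \<exists>\<mu>\<in>\<Lambda>. R = (\<lambda>x. (1 - \<mu>) *\<^sub>R x + \<mu> *\<^sub>R proj C x)}"

end

theory Submission
  imports Defs
begin

(* Relaxed projections with parameters in [0, 2] are nonexpansive, so it suffices
   to bound the orbits of 0; these stay in the span V of the normals of all constraints.
   The argument is an induction on the number of distinct normals. For a unit vector u in V,
   keep the systems whose normals all satisfy a \<bullet> u \<le> 0 and, in them, only the constraints
   orthogonal to u: this recession family has fewer normals, so by induction its orbits are
   bounded and the supremum Phi of the norms along them is a Lyapunov function for it.
   Far out in a narrow cone around u, a step is either governed by a constraint whose normal
   makes an acute angle with u, which pulls the point back and lowers its height x \<bullet> u, or it
   keeps the height and acts on the transversal part x - (x \<bullet> u) u as a step of the recession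
   family. Hence W x = x \<bullet> u + kappa Phi (x - (x \<bullet> u) u) does not increase while the orbit stays
   in the cone, and when it leaves the cone its norm drops below (1 - alpha/4) W x. By
   compactness of the unit sphere of V finitely many cones cover all far points of V, and
   these piecewise Lyapunov bounds confine the orbit of 0 to a bounded set. *)

section \<open>Nearest-point projections\<close>

lemma parallelogram_midpoint:
  fixes x a b :: "'a::real_inner"
  shows "norm (a - b) ^ 2 = 2 * dist x a ^ 2 + 2 * dist x b ^ 2 - 4 * dist x ((1/2) *\<^sub>R (a + b)) ^ 2"
  unfolding dist_norm power2_norm_eq_inner
  by (simp add: inner_commute algebra_simps)

lemma convex_midpoint: "convex C \<Longrightarrow> a \<in> C \<Longrightarrow> b \<in> C \<Longrightarrow> (1/2) *\<^sub>R (a + b) \<in> C"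
  using convexD[of C a b "1/2" "1/2"] by (simp add: scaleR_add_right)

lemma minimizing_sequence_Cauchy:
  fixes C :: "'a::real_inner set"
  assumes "convex C" and f_in: "\<And>n. f n \<in> C" and d_le: "\<And>y. y \<in> C \<Longrightarrow> d \<le> dist x y" and "0 \<le> d"
    and f_dist: "\<And>n. dist x (f n) ^ 2 < d ^ 2 + 1 / Suc n"
  shows "Cauchy f"
proof (rule metric_CauchyI)
  have f_close: "norm (f m - f n) ^ 2 \<le> 2 / Suc m + 2 / Suc n" for m n
  proof -
    have "d ^ 2 \<le> dist x ((1/2) *\<^sub>R (f m + f n)) ^ 2"
      using d_le[OF convex_midpoint[OF assms(1) f_in f_in]] \<open>0 \<le> d\<close> by (intro power_mono) auto
    then show ?thesis
      using parallelogram_midpoint[of "f m" "f n" x] f_dist[of m] f_dist[of n] by linarith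
  qed
  fix e :: real assume "e > 0"
  obtain N :: nat where N: "4 / e ^ 2 < N" using reals_Archimedean2 by blast
  have small: "2 / Suc n < e ^ 2 / 2" if "N \<le> n" for n
  proof -
    have "4 / e ^ 2 < Suc n" using N that by linarith
    then show ?thesis using \<open>e > 0\<close> by (simp add: field_simps)
  qed
  have "dist (f m) (f n) < e" if "N \<le> m" "N \<le> n" for m n
  proof -
    have "dist (f m) (f n) ^ 2 < e ^ 2"
      using f_close[of m n] small[OF that(1)] small[OF that(2)] by (simp add: dist_norm)
    then show ?thesis using \<open>e > 0\<close> by (simp add: power_less_imp_less_base)
  qed
  then show "\<exists>M. \<forall>m\<ge>M. \<forall>n\<ge>M. dist (f m) (f n) < e" by blast
qed

lemma nearest_point_exists:
  fixes C :: "'a::{real_inner,complete_space} set"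
  assumes "closed C" "convex C" "C \<noteq> {}"
  shows "\<exists>p\<in>C. \<forall>y\<in>C. dist x p \<le> dist x y"
proof -
  define d where "d = Inf (dist x ` C)"
  have bdd: "bdd_below (dist x ` C)" by (rule bdd_belowI[of _ 0]) auto
  have d_le: "d \<le> dist x y" if "y \<in> C" for y
    unfolding d_def using that bdd by (simp add: cInf_lower)
  have "0 \<le> d" unfolding d_def using assms(3) by (intro cInf_greatest) auto
  have "\<exists>y\<in>C. dist x y ^ 2 < d ^ 2 + 1 / Suc n" for n
  proof -
    have "d < sqrt (d ^ 2 + 1 / Suc n)" using \<open>0 \<le> d\<close> by (intro real_less_rsqrt) simp
    then obtain y where "y \<in> C" "dist x y < sqrt (d ^ 2 + 1 / Suc n)"
      using cInf_lessD[of "dist x ` C"] assms(3) unfolding d_def by blast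
    moreover have "dist x y ^ 2 < sqrt (d ^ 2 + 1 / Suc n) ^ 2"
      using calculation(2) by (intro power_strict_mono) auto
    ultimately show ?thesis by auto
  qed
  then obtain f where f_in: "\<And>n. f n \<in> C" and f_dist: "\<And>n. dist x (f n) ^ 2 < d ^ 2 + 1 / Suc n"
    by metis
  have "Cauchy f" using minimizing_sequence_Cauchy[OF assms(2) f_in d_le \<open>0 \<le> d\<close> f_dist] .
  then obtain p where p: "f \<longlonglongrightarrow> p" using Cauchy_convergent_iff convergent_def by blast
  have "p \<in> C" using closed_sequentially[OF assms(1) f_in p] .
  have "(\<lambda>n. dist x (f n) ^ 2) \<longlonglongrightarrow> dist x p ^ 2" using p by (intro tendsto_intros)
  moreover have "(\<lambda>n. d ^ 2 + 1 / Suc n) \<longlonglongrightarrow> d ^ 2 + 0"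
    using LIMSEQ_inverse_real_of_nat by (intro tendsto_intros) (simp add: inverse_eq_divide)
  ultimately have "dist x p ^ 2 \<le> d ^ 2"
    using f_dist by (intro LIMSEQ_le) (auto intro: less_imp_le)
  then have "dist x p \<le> d" using \<open>0 \<le> d\<close> by (simp add: power2_le_iff_abs_le)
  then show ?thesis using \<open>p \<in> C\<close> d_le by (meson order_trans)
qed

lemma nearest_point_unique:
  fixes C :: "'a::real_inner set"
  assumes "convex C"
    and "p \<in> C" "\<forall>y\<in>C. dist x p \<le> dist x y"
    and "q \<in> C" "\<forall>y\<in>C. dist x q \<le> dist x y"
  shows "p = q"
proof -
  have "dist x p = dist x q" using assms by (meson antisym)
  moreover have "dist x p ^ 2 \<le> dist x ((1/2) *\<^sub>R (p + q)) ^ 2"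
    using assms convex_midpoint[OF assms(1,2,4)] by (intro power_mono) auto
  ultimately have "norm (p - q) ^ 2 \<le> 0" using parallelogram_midpoint[of p q x] by simp
  then show ?thesis by simp
qed

lemma
  fixes C :: "'a::{real_inner,complete_space} set"
  assumes "closed C" "convex C" "C \<noteq> {}"
  shows proj_in: "proj C x \<in> C"
    and dist_proj_le: "y \<in> C \<Longrightarrow> dist x (proj C x) \<le> dist x y"
proof -
  have "\<exists>!p. p \<in> C \<and> (\<forall>y\<in>C. dist x p \<le> dist x y)"
    using nearest_point_exists[OF assms, of x] nearest_point_unique[OF assms(2)] by blast
  then have "proj C x \<in> C \<and> (\<forall>y\<in>C. dist x (proj C x) \<le> dist x y)"
    unfolding proj_def by (rule theI')
  then show "proj C x \<in> C" "y \<in> C \<Longrightarrow> dist x (proj C x) \<le> dist x y" by auto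
qed

lemma proj_eqI:
  fixes C :: "'a::real_inner set"
  assumes "convex C" "p \<in> C" "\<forall>y\<in>C. dist x p \<le> dist x y"
  shows "proj C x = p"
  unfolding proj_def using assms nearest_point_unique[OF assms(1)] by (intro the_equality) auto

lemma proj_variational_ineq:
  fixes C :: "'a::{real_inner,complete_space} set"
  assumes C: "closed C" "convex C" "C \<noteq> {}" and "c \<in> C"
  shows "inner (x - proj C x) (c - proj C x) \<le> 0"
proof (rule ccontr)
  define p where "p = proj C x"
  define v where "v = inner (x - p) (c - p)"
  define w where "w = norm (c - p) ^ 2"
  assume "\<not> ?thesis"
  then have "v > 0" unfolding v_def p_def by simp
  then have "w > 0" unfolding w_def v_def by (cases "c = p") auto
  define th where "th = min 1 (v / w)"
  have th: "0 < th" "th \<le> 1" "th * w \<le> v"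
    unfolding th_def using \<open>v > 0\<close> \<open>w > 0\<close> by (auto simp: min_def field_simps)
  have "p + th *\<^sub>R (c - p) = (1 - th) *\<^sub>R p + th *\<^sub>R c" by (simp add: algebra_simps)
  also have "\<dots> \<in> C" using convexD_alt[OF C(2) proj_in[OF C] \<open>c \<in> C\<close>] th unfolding p_def by simp
  finally have "dist x p ^ 2 \<le> dist x (p + th *\<^sub>R (c - p)) ^ 2"
    unfolding p_def by (intro power_mono dist_proj_le[OF C]) auto
  also have "\<dots> = dist x p ^ 2 - 2 * th * v + th ^ 2 * w"
    unfolding dist_norm power2_norm_eq_inner v_def w_def
    by (simp add: inner_commute algebra_simps power2_eq_square)
  finally have "2 * v \<le> th * w" using th(1) by (simp add: power2_eq_square)
  then show False using th(3) \<open>v > 0\<close> by simp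
qed

lemma proj_eqI_variational:
  fixes C :: "'a::real_inner set"
  assumes "convex C" "p \<in> C" "\<forall>c\<in>C. inner (x - p) (c - p) \<le> 0"
  shows "proj C x = p"
proof (rule proj_eqI[OF assms(1,2)], intro ballI)
  fix y assume "y \<in> C"
  have "dist x y ^ 2 = dist x p ^ 2 - 2 * inner (x - p) (y - p) + norm (y - p) ^ 2"
    unfolding dist_norm power2_norm_eq_inner by (simp add: inner_commute algebra_simps)
  then have "dist x p ^ 2 \<le> dist x y ^ 2" using assms(3) \<open>y \<in> C\<close> by (smt (verit) zero_le_power2)
  then show "dist x p \<le> dist x y" by (simp add: power2_le_iff_abs_le)
qed

lemma proj_firmly_nonexpansive:
  fixes C :: "'a::{real_inner,complete_space} set"
  assumes C: "closed C" "convex C" "C \<noteq> {}"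
  shows "norm (proj C x - proj C x') ^ 2 \<le> inner (x - x') (proj C x - proj C x')"
proof -
  have "inner (x - proj C x) (proj C x' - proj C x) \<le> 0"
    by (rule proj_variational_ineq[OF C proj_in[OF C]])
  moreover have "inner (x' - proj C x') (proj C x - proj C x') \<le> 0"
    by (rule proj_variational_ineq[OF C proj_in[OF C]])
  ultimately show ?thesis
    unfolding power2_norm_eq_inner by (simp add: inner_commute algebra_simps)
qed

definition relax_proj :: "'a::real_inner set \<Rightarrow> real \<Rightarrow> 'a \<Rightarrow> 'a" where
  "relax_proj C \<mu> x = (1 - \<mu>) *\<^sub>R x + \<mu> *\<^sub>R proj C x"

lemma relax_proj_minus: "relax_proj C \<mu> x - x = \<mu> *\<^sub>R (proj C x - x)"
  unfolding relax_proj_def by (simp add: algebra_simps)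

lemma relax_proj_nonexpansive:
  fixes C :: "'a::{real_inner,complete_space} set"
  assumes C: "closed C" "convex C" "C \<noteq> {}" and "0 \<le> \<mu>" "\<mu> \<le> 2"
  shows "norm (relax_proj C \<mu> x - relax_proj C \<mu> x') \<le> norm (x - x')"
proof -
  define d where "d = x - x'"
  define e where "e = proj C x - proj C x'"
  \<comment> \<open>firm nonexpansiveness of the projection P says that the reflection 2P - I is nonexpansive\<close>
  have "norm (2 *\<^sub>R e - d) ^ 2 \<le> norm d ^ 2"
    using proj_firmly_nonexpansive[OF C, of x x'] unfolding d_def[symmetric] e_def[symmetric]
    unfolding power2_norm_eq_inner by (simp add: inner_commute algebra_simps)
  then have refl: "norm (2 *\<^sub>R e - d) \<le> norm d" by (simp add: power2_le_iff_abs_le)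
  have "relax_proj C \<mu> x - relax_proj C \<mu> x' = (1 - \<mu>/2) *\<^sub>R d + (\<mu>/2) *\<^sub>R (2 *\<^sub>R e - d)"
    unfolding relax_proj_def d_def e_def by (simp add: algebra_simps flip: scaleR_add_left)
  also have "norm \<dots> \<le> (1 - \<mu>/2) * norm d + (\<mu>/2) * norm (2 *\<^sub>R e - d)"
    using assms(4,5) by (intro norm_triangle_le add_mono) auto
  also have "\<dots> \<le> (1 - \<mu>/2) * norm d + (\<mu>/2) * norm d"
    using refl assms(4) by (intro add_left_mono mult_left_mono) auto
  finally show ?thesis unfolding d_def by (simp add: algebra_simps)
qed

lemma inner_proj_residual_le:
  fixes C :: "'a::{real_inner,complete_space} set"
  assumes C: "closed C" "convex C" "C \<noteq> {}" and "c \<in> C"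
  shows "inner (x - proj C x) (proj C x) \<ge> - norm (x - proj C x) * norm c"
proof -
  have "inner (x - proj C x) c \<ge> - norm (x - proj C x) * norm c"
    using Cauchy_Schwarz_ineq2[of "x - proj C x" c] by (simp add: abs_le_iff)
  then show ?thesis using proj_variational_ineq[OF assms, of x] by (simp add: inner_diff_right)
qed

lemma inner_residual_ge:
  fixes C :: "'a::{real_inner,complete_space} set"
  assumes C: "closed C" "convex C" "C \<noteq> {}" and "c \<in> C"
  shows "inner (x - proj C x) x \<ge> norm (x - proj C x) ^ 2 - norm (x - proj C x) * norm c"
proof -
  have "inner (x - proj C x) x = inner (x - proj C x) (proj C x) + norm (x - proj C x) ^ 2"
    unfolding power2_norm_eq_inner by (simp add: inner_commute algebra_simps)
  then show ?thesis using inner_proj_residual_le[OF assms, of x] by simp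
qed

lemma norm_relax_proj_sq_le:
  fixes C :: "'a::{real_inner,complete_space} set" and x :: 'a
  assumes C: "closed C" "convex C" "C \<noteq> {}" and "c \<in> C" and "0 \<le> \<mu>"
  defines "d \<equiv> norm (x - proj C x)"
  shows "norm (relax_proj C \<mu> x) ^ 2 \<le> norm x ^ 2 + \<mu> * d * (2 * norm c - (2 - \<mu>) * d)"
proof -
  define p where "p = proj C x"
  have "relax_proj C \<mu> x = x - \<mu> *\<^sub>R (x - p)" unfolding relax_proj_def p_def by (simp add: algebra_simps)
  then have "norm (relax_proj C \<mu> x) ^ 2 = norm (x - \<mu> *\<^sub>R (x - p)) ^ 2" by simp
  also have "\<dots> = norm x ^ 2 - 2 * \<mu> * (inner (x - p) p + d ^ 2) + \<mu> ^ 2 * d ^ 2"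
    unfolding d_def p_def[symmetric] power2_norm_eq_inner
    by (simp add: inner_commute algebra_simps power2_eq_square)
  also have "\<dots> \<le> norm x ^ 2 - 2 * \<mu> * (- d * norm c + d ^ 2) + \<mu> ^ 2 * d ^ 2"
    using inner_proj_residual_le[OF C \<open>c \<in> C\<close>, of x] \<open>0 \<le> \<mu>\<close> unfolding d_def p_def
    by (simp add: mult_left_mono)
  finally show ?thesis by (simp add: algebra_simps power2_eq_square)
qed

section \<open>Feasible sets of finite systems of linear inequalities\<close>

definition feasible_set :: "('a::real_inner \<times> real) set \<Rightarrow> 'a set" where
  "feasible_set S = {x. \<forall>(a, b)\<in>S. inner a x \<le> b}"

lemma feasible_set_eq_INT: "feasible_set S = (\<Inter>(a, b)\<in>S. {x. inner a x \<le> b})"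
  unfolding feasible_set_def by auto

lemma closed_feasible_set: "closed (feasible_set S)"
  unfolding feasible_set_eq_INT by (auto intro!: closed_halfspace_le)

lemma convex_feasible_set: "convex (feasible_set S)"
  unfolding feasible_set_eq_INT by (auto intro!: convex_INT convex_halfspace_le)

lemma feasible_set_antimono: "S \<subseteq> S' \<Longrightarrow> feasible_set S' \<subseteq> feasible_set S"
  unfolding feasible_set_def by auto

lemmas feasible_set_closed_convex = closed_feasible_set convex_feasible_set

lemma feasible_set_translate:
  assumes "\<forall>(a, b)\<in>S. inner a w = 0"
  shows "x + w \<in> feasible_set S \<longleftrightarrow> x \<in> feasible_set S"
  using assms unfolding feasible_set_def by (fastforce simp: inner_add_right)

lemma proj_feasible_set_translate:
  fixes x :: "'a::{real_inner,complete_space}"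
  assumes ne: "feasible_set S \<noteq> {}" and w: "\<forall>(a, b)\<in>S. inner a w = 0"
  shows "proj (feasible_set S) (x + w) = proj (feasible_set S) x + w"
proof (rule proj_eqI_variational[OF convex_feasible_set])
  note C = feasible_set_closed_convex ne
  show "proj (feasible_set S) x + w \<in> feasible_set S"
    using feasible_set_translate[OF w] proj_in[OF C] by blast
  show "\<forall>c\<in>feasible_set S. inner (x + w - (proj (feasible_set S) x + w)) (c - (proj (feasible_set S) x + w)) \<le> 0"
  proof
    fix c assume "c \<in> feasible_set S"
    then have "c - w \<in> feasible_set S" using feasible_set_translate[OF w, of "c - w"] by simp
    from proj_variational_ineq[OF C this, of x]
    show "inner (x + w - (proj (feasible_set S) x + w)) (c - (proj (feasible_set S) x + w)) \<le> 0"
      by (simp add: algebra_simps)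
  qed
qed

lemma relax_proj_feasible_set_translate:
  fixes x :: "'a::{real_inner,complete_space}"
  assumes "feasible_set S \<noteq> {}" "\<forall>(a, b)\<in>S. inner a w = 0"
  shows "relax_proj (feasible_set S) \<mu> (x + w) = relax_proj (feasible_set S) \<mu> x + w"
  unfolding relax_proj_def proj_feasible_set_translate[OF assms] by (simp add: algebra_simps)

lemma proj_feasible_set_residual_orthogonal:
  fixes x :: "'a::{real_inner,complete_space}"
  assumes ne: "feasible_set S \<noteq> {}" and w: "\<forall>(a, b)\<in>S. inner a w = 0"
  shows "inner (x - proj (feasible_set S) x) w = 0"
proof -
  note C = feasible_set_closed_convex ne
  have "proj (feasible_set S) x + w \<in> feasible_set S" "proj (feasible_set S) x + - w \<in> feasible_set S"
    using feasible_set_translate[of S w] feasible_set_translate[of S "- w"] w proj_in[OF C] by auto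
  from this[THEN proj_variational_ineq[OF C, of _ x]] show ?thesis by simp
qed

section \<open>Orbits of nonexpansive steps\<close>

lemma rtranclp_shadow:
  fixes step :: "'a::metric_space \<Rightarrow> 'a \<Rightarrow> bool"
  assumes sim: "\<And>x y x'. step x y \<Longrightarrow> \<exists>y'. step x' y' \<and> dist y y' \<le> dist x x'"
    and "step\<^sup>*\<^sup>* x z"
  shows "\<exists>z'. step\<^sup>*\<^sup>* x' z' \<and> dist z z' \<le> dist x x'"
  using assms(2)
proof (induction rule: rtranclp_induct)
  case (step y z)
  then obtain y' where "step\<^sup>*\<^sup>* x' y'" "dist y y' \<le> dist x x'" by blast
  with sim[OF step.hyps(2), of y'] show ?case
    by (meson order_trans rtranclp.rtrancl_into_rtrancl)
qed auto

lemma orbit_norm_bound_from_zero: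
  fixes step :: "'a::real_normed_vector \<Rightarrow> 'a \<Rightarrow> bool"
  assumes sim: "\<And>x y x'. step x y \<Longrightarrow> \<exists>y'. step x' y' \<and> dist y y' \<le> dist x x'"
    and bound: "\<And>z. step\<^sup>*\<^sup>* 0 z \<Longrightarrow> norm z \<le> B"
    and "step\<^sup>*\<^sup>* x z"
  shows "norm z \<le> norm x + B"
proof -
  obtain z' where "step\<^sup>*\<^sup>* 0 z'" "dist z z' \<le> dist x 0"
    using rtranclp_shadow[OF sim assms(3)] by blast
  then show ?thesis using bound[of z'] norm_triangle_sub[of z z'] by (simp add: dist_norm)
qed

definition orbit_sup :: "('a::real_normed_vector \<Rightarrow> 'a \<Rightarrow> bool) \<Rightarrow> 'a \<Rightarrow> real" where
  "orbit_sup step y = (SUP z\<in>{z. step\<^sup>*\<^sup>* y z}. norm z)"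

context
  fixes step :: "'a::real_normed_vector \<Rightarrow> 'a \<Rightarrow> bool" and K :: real
  assumes orbit_bound: "\<And>y z. step\<^sup>*\<^sup>* y z \<Longrightarrow> norm z \<le> norm y + K"
begin

lemma norm_le_orbit_sup: "step\<^sup>*\<^sup>* y z \<Longrightarrow> norm z \<le> orbit_sup step y"
  unfolding orbit_sup_def using orbit_bound by (intro cSUP_upper bdd_aboveI2) auto

lemma orbit_sup_le: "orbit_sup step y \<le> norm y + K"
  unfolding orbit_sup_def using orbit_bound by (intro cSUP_least) auto

lemma orbit_sup_antimono: "step\<^sup>*\<^sup>* y y' \<Longrightarrow> orbit_sup step y' \<le> orbit_sup step y"
  unfolding orbit_sup_def[of _ y']
  by (intro cSUP_least norm_le_orbit_sup) (auto intro: rtranclp_trans)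

lemma orbit_sup_lipschitz:
  assumes sim: "\<And>x y x'. step x y \<Longrightarrow> \<exists>y'. step x' y' \<and> dist y y' \<le> dist x x'"
  shows "orbit_sup step y \<le> orbit_sup step y' + norm (y - y')"
  unfolding orbit_sup_def[of _ y]
proof (intro cSUP_least)
  fix z assume "z \<in> {z. step\<^sup>*\<^sup>* y z}"
  then obtain z' where "step\<^sup>*\<^sup>* y' z'" "dist z z' \<le> dist y y'"
    using rtranclp_shadow[OF sim] by blast
  then show "norm z \<le> orbit_sup step y' + norm (y - y')"
    using norm_le_orbit_sup norm_triangle_sub[of z z'] by (fastforce simp: dist_norm)
qed auto

end

definition relax_step :: "('a::real_inner \<times> real) set set \<Rightarrow> real \<Rightarrow> 'a \<Rightarrow> 'a \<Rightarrow> bool" where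
  "relax_step F lam x y \<longleftrightarrow> (\<exists>S\<in>F. \<exists>\<mu>\<in>{0..lam}. y = relax_proj (feasible_set S) \<mu> x)"

lemma relax_step_shadow:
  fixes F :: "('a::{real_inner,complete_space} \<times> real) set set"
  assumes "\<forall>S\<in>F. feasible_set S \<noteq> {}" "lam \<le> 2" and "relax_step F lam x y"
  shows "\<exists>y'. relax_step F lam x' y' \<and> dist y y' \<le> dist x x'"
proof -
  obtain S \<mu> where S: "S \<in> F" "\<mu> \<in> {0..lam}" "y = relax_proj (feasible_set S) \<mu> x"
    using assms(3) unfolding relax_step_def by blast
  have "dist y (relax_proj (feasible_set S) \<mu> x') \<le> dist x x'"
    unfolding S(3) dist_norm using assms(1,2) S(1,2)
    by (intro relax_proj_nonexpansive feasible_set_closed_convex) auto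
  then show ?thesis using S(1,2) unfolding relax_step_def by blast
qed

section \<open>Finite-dimensional spans\<close>

definition orthonormal :: "'a::real_inner set \<Rightarrow> bool" where
  "orthonormal E \<longleftrightarrow> pairwise orthogonal E \<and> (\<forall>e\<in>E. norm e = 1)"

definition onb_proj :: "'a::real_inner set \<Rightarrow> 'a \<Rightarrow> 'a" where
  "onb_proj E x = (\<Sum>e\<in>E. inner x e *\<^sub>R e)"

lemma inner_onb_proj:
  assumes "finite E" "orthonormal E" "f \<in> E"
  shows "inner (onb_proj E x) f = inner x f"
proof -
  have "inner (onb_proj E x) f = (\<Sum>e\<in>E. inner x e * inner e f)"
    unfolding onb_proj_def by (simp add: inner_sum_left)
  also have "\<dots> = (\<Sum>e\<in>{f}. inner x e * inner e f)"
    using assms unfolding orthonormal_def pairwise_def orthogonal_def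
    by (intro sum.mono_neutral_right) auto
  also have "\<dots> = inner x f"
    using assms unfolding orthonormal_def by (simp add: dot_square_norm)
  finally show ?thesis .
qed

lemma onb_proj_in_span: "finite E \<Longrightarrow> onb_proj E x \<in> span E"
  unfolding onb_proj_def by (intro span_sum span_scale span_base)

lemma onb_proj_residual_orthogonal:
  assumes "finite E" "orthonormal E" "v \<in> span E"
  shows "inner (x - onb_proj E x) v = 0"
  using orthogonal_to_span[OF assms(3), of "x - onb_proj E x"] inner_onb_proj[OF assms(1,2)]
  by (simp add: orthogonal_def inner_diff_left)

lemma onb_proj_id:
  assumes "finite E" "orthonormal E" "x \<in> span E"
  shows "onb_proj E x = x"
proof -
  have "x - onb_proj E x \<in> span E" using assms onb_proj_in_span by (auto intro: span_diff)
  then have "inner (x - onb_proj E x) (x - onb_proj E x) = 0"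
    by (rule onb_proj_residual_orthogonal[OF assms(1,2)])
  then show ?thesis by simp
qed

lemma gram_schmidt_step:
  assumes E: "finite E" "orthonormal E" and "a \<notin> span E"
  defines "e \<equiv> (a - onb_proj E a) /\<^sub>R norm (a - onb_proj E a)"
  shows "orthonormal (insert e E)" "span (insert e E) = span (insert a E)"
proof -
  define a' where "a' = a - onb_proj E a"
  have "a' \<noteq> 0" using assms(3) onb_proj_in_span[OF E(1), of a] unfolding a'_def by auto
  have "inner e f = 0" if "f \<in> E" for f
    using inner_onb_proj[OF E that, of a] unfolding e_def by (simp add: inner_diff_left)
  then show "orthonormal (insert e E)"
    using E(2) \<open>a' \<noteq> 0\<close> unfolding e_def a'_def[symmetric] orthonormal_def pairwise_insert orthogonal_def
    by (auto simp: inner_commute)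
  have "a' \<in> span (insert a E)" unfolding a'_def
    using onb_proj_in_span[OF E(1), of a] span_mono[of E "insert a E"] by (auto intro: span_diff span_base)
  then have "insert e E \<subseteq> span (insert a E)"
    unfolding e_def a'_def[symmetric] using span_superset[of "insert a E"] by (auto intro: span_scale)
  moreover have "a = norm a' *\<^sub>R e + onb_proj E a" unfolding e_def a'_def[symmetric] using \<open>a' \<noteq> 0\<close>
    by (simp add: a'_def)
  then have "a \<in> span (insert e E)"
    using onb_proj_in_span[OF E(1)] span_mono[of E "insert e E"]
    by (metis span_add span_scale span_base insertI1 subset_insertI subsetD)
  then have "insert a E \<subseteq> span (insert e E)" using span_superset[of "insert e E"] by auto
  ultimately show "span (insert e E) = span (insert a E)" by (simp add: span_eq)
qed

lemma orthonormal_basis_of_span_exists: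
  fixes A :: "'a::real_inner set"
  assumes "finite A"
  shows "\<exists>E. finite E \<and> orthonormal E \<and> span E = span A"
  using assms
proof (induction rule: finite_induct)
  case empty
  show ?case by (intro exI[of _ "{}"]) (auto simp: orthonormal_def)
next
  case (insert a A)
  then obtain E where E: "finite E" "orthonormal E" "span E = span A" by auto
  show ?case
  proof (cases "a \<in> span A")
    case True
    then show ?thesis using E span_redundant by metis
  next
    case False
    then have "a \<notin> span E" using E(3) by simp
    have "span (insert a E) = span (insert a A)" using E(3) by (simp add: span_insert)
    then show ?thesis using gram_schmidt_step[OF E(1,2) \<open>a \<notin> span E\<close>] E(1) by (metis finite.insertI)
  qed
qed

definition zonotope :: "'a::real_normed_vector set \<Rightarrow> 'a set" where
  "zonotope E = (\<lambda>c. \<Sum>e\<in>E. c e *\<^sub>R e) ` {c. \<forall>e\<in>E. \<bar>c e\<bar> \<le> 1}"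

lemma zonotope_insert:
  assumes "e \<notin> E" "finite E"
  shows "zonotope (insert e E) = {x + y | x y. x \<in> (\<lambda>s. s *\<^sub>R e) ` {-1..1} \<and> y \<in> zonotope E}"
proof (intro equalityI subsetI)
  fix z assume "z \<in> zonotope (insert e E)"
  then obtain c where c: "\<forall>f\<in>insert e E. \<bar>c f\<bar> \<le> 1" "z = (\<Sum>f\<in>insert e E. c f *\<^sub>R f)"
    unfolding zonotope_def by auto
  then have "z = c e *\<^sub>R e + (\<Sum>f\<in>E. c f *\<^sub>R f)" using assms by simp
  moreover have "(\<Sum>f\<in>E. c f *\<^sub>R f) \<in> zonotope E" using c(1) unfolding zonotope_def by auto
  moreover have "c e *\<^sub>R e \<in> (\<lambda>s. s *\<^sub>R e) ` {-1..1}" using c(1) by (auto simp: abs_le_iff)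
  ultimately show "z \<in> {x + y | x y. x \<in> (\<lambda>s. s *\<^sub>R e) ` {-1..1} \<and> y \<in> zonotope E}"
    by blast
next
  fix z assume "z \<in> {x + y | x y. x \<in> (\<lambda>s. s *\<^sub>R e) ` {-1..1} \<and> y \<in> zonotope E}"
  then obtain s c where sc: "s \<in> {-1..1}" "\<forall>f\<in>E. \<bar>c f\<bar> \<le> 1" "z = s *\<^sub>R e + (\<Sum>f\<in>E. c f *\<^sub>R f)"
    unfolding zonotope_def by auto
  have "(\<Sum>f\<in>E. (c(e := s)) f *\<^sub>R f) = (\<Sum>f\<in>E. c f *\<^sub>R f)"
    using assms by (intro sum.cong) auto
  then have "z = (\<Sum>f\<in>insert e E. (c(e := s)) f *\<^sub>R f)" using sc assms by simp
  moreover have "\<forall>f\<in>insert e E. \<bar>(c(e := s)) f\<bar> \<le> 1" using sc by (auto simp: abs_le_iff)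
  ultimately show "z \<in> zonotope (insert e E)" unfolding zonotope_def by blast
qed

lemma compact_zonotope:
  fixes E :: "'a::real_normed_vector set"
  assumes "finite E"
  shows "compact (zonotope E)"
  using assms
proof (induction rule: finite_induct)
  case empty
  have "zonotope ({}::'a set) = {0}" unfolding zonotope_def by auto
  then show ?case by simp
next
  case (insert e E)
  have "compact ((\<lambda>s. s *\<^sub>R e) ` {-1..1::real})"
    by (intro compact_continuous_image continuous_intros) auto
  from compact_sums[OF this insert.IH] show ?case
    unfolding zonotope_insert[OF insert.hyps(2,1)] .
qed

lemma compact_sphere_span:
  fixes E :: "'a::real_inner set"
  assumes E: "finite E" "orthonormal E"
  shows "compact {x \<in> span E. norm x = 1}"
proof -
  have "{x \<in> span E. norm x = 1} = zonotope E \<inter> {x. norm x = 1}"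
  proof (intro equalityI subsetI)
    fix x assume x: "x \<in> {x \<in> span E. norm x = 1}"
    have "x = (\<Sum>e\<in>E. inner x e *\<^sub>R e)" using onb_proj_id[OF E, of x] x unfolding onb_proj_def by auto
    moreover have "\<bar>inner x e\<bar> \<le> 1" if "e \<in> E" for e
      using E(2) that x Cauchy_Schwarz_ineq2[of x e] unfolding orthonormal_def by simp
    ultimately show "x \<in> zonotope E \<inter> {x. norm x = 1}" using x unfolding zonotope_def by auto
  next
    fix x assume "x \<in> zonotope E \<inter> {x. norm x = 1}"
    then show "x \<in> {x \<in> span E. norm x = 1}"
      unfolding zonotope_def using span_base[of _ E] by (auto intro!: span_sum span_scale)
  qed
  moreover have "closed {x::'a. norm x = 1}" by (intro closed_Collect_eq continuous_intros)
  ultimately show ?thesis using compact_Int_closed[OF compact_zonotope[OF E(1)]] by simp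
qed

lemma compact_finite_ball_cover:
  fixes S :: "'a::metric_space set"
  assumes "compact S" "\<And>u. u \<in> S \<Longrightarrow> 0 < r u"
  obtains D where "finite D" "D \<subseteq> S" "S \<subseteq> (\<Union>u\<in>D. ball u (r u))"
proof -
  have "u \<in> ball u (r u)" if "u \<in> S" for u using assms(2)[OF that] by simp
  then have "S \<subseteq> (\<Union>u\<in>S. ball u (r u))" by blast
  then show ?thesis using compactE_image[OF assms(1), of S "\<lambda>u. ball u (r u)"] that by blast
qed

lemma proj_feasible_set_in_span:
  fixes z :: "'a::{real_inner,complete_space}"
  assumes E: "finite E" "orthonormal E" and normals: "\<forall>(a, b)\<in>S. a \<in> span E"
    and ne: "feasible_set S \<noteq> {}" and "z \<in> span E"
  shows "proj (feasible_set S) z \<in> span E"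
proof -
  note C = feasible_set_closed_convex ne
  define p where "p = proj (feasible_set S) z"
  define p' where "p' = onb_proj E p"
  have orth: "inner (p - p') v = 0" if "v \<in> span E" for v
    unfolding p'_def by (rule onb_proj_residual_orthogonal[OF E that])
  \<comment> \<open>p' differs from p by a vector orthogonal to all normals, so it is feasible and no farther from z\<close>
  have "\<forall>(a, b)\<in>S. inner a (p' - p) = 0"
    using normals orth by (fastforce simp: inner_commute inner_diff_right inner_diff_left)
  then have "p' \<in> feasible_set S"
    using feasible_set_translate[of S "p' - p" p] proj_in[OF C] unfolding p_def by simp
  have "p' \<in> span E" unfolding p'_def by (rule onb_proj_in_span[OF E(1)])
  have "z - p' \<in> span E" using \<open>z \<in> span E\<close> \<open>p' \<in> span E\<close> by (rule span_diff)
  then have "inner (p - p') (z - p') = 0" by (rule orth)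
  then have "dist z p ^ 2 = dist z p' ^ 2 + norm (p - p') ^ 2"
    unfolding dist_norm power2_norm_eq_inner by (simp add: inner_commute algebra_simps)
  then have "dist z p' ^ 2 \<le> dist z p ^ 2" by simp
  then have "dist z p' \<le> dist z p" by (simp add: power2_le_iff_abs_le)
  then have "\<forall>y\<in>feasible_set S. dist z p' \<le> dist z y"
    using dist_proj_le[OF C] unfolding p_def by (meson order_trans)
  then have "p = p'" unfolding p_def by (rule proj_eqI[OF convex_feasible_set \<open>p' \<in> feasible_set S\<close>])
  then show ?thesis using \<open>p' \<in> span E\<close> unfolding p_def by simp
qed

section \<open>Cones around a direction\<close>

definition transversal :: "'a::real_inner \<Rightarrow> 'a \<Rightarrow> 'a" where
  "transversal u x = x - inner x u *\<^sub>R u"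

definition in_cone :: "'a::real_inner \<Rightarrow> real \<Rightarrow> 'a \<Rightarrow> bool" where
  "in_cone u \<delta> x \<longleftrightarrow> norm (transversal u x) \<le> \<delta> * inner x u"

definition cone_lyapunov :: "'a::real_inner \<Rightarrow> real \<Rightarrow> ('a \<Rightarrow> real) \<Rightarrow> 'a \<Rightarrow> real" where
  "cone_lyapunov u \<kappa> \<Phi> x = inner x u + \<kappa> * \<Phi> (transversal u x)"

lemma transversal_decomp: "x = inner x u *\<^sub>R u + transversal u x"
  unfolding transversal_def by simp

lemma transversal_diff: "transversal u x' - transversal u x = transversal u (x' - x)"
  unfolding transversal_def by (simp add: algebra_simps)

context
  fixes u :: "'a::real_inner"
  assumes unit: "norm u = 1"
begin

lemma inner_transversal: "inner (transversal u x) u = 0"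
  unfolding transversal_def using unit by (simp add: inner_diff_left dot_square_norm)

lemma norm_sq_transversal: "norm x ^ 2 = inner x u ^ 2 + norm (transversal u x) ^ 2"
proof -
  have "norm x ^ 2 = norm (inner x u *\<^sub>R u + transversal u x) ^ 2"
    using transversal_decomp[of x u] by simp
  also have "\<dots> = inner x u ^ 2 * inner u u + 2 * inner x u * inner (transversal u x) u
      + inner (transversal u x) (transversal u x)"
    unfolding power2_norm_eq_inner by (simp add: inner_commute power2_eq_square algebra_simps)
  also have "\<dots> = inner x u ^ 2 + norm (transversal u x) ^ 2"
    using inner_transversal[of x] unit by (simp add: power2_norm_eq_inner[symmetric])
  finally show ?thesis .
qed

lemma abs_inner_unit_le: "\<bar>inner x u\<bar> \<le> norm x"
  using Cauchy_Schwarz_ineq2[of x u] unit by simp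

lemma norm_transversal_le: "norm (transversal u x) \<le> norm x"
  using norm_sq_transversal[of x]
  by (metis abs_norm_cancel le_add_same_cancel2 power2_le_iff_abs_le zero_le_power2 norm_ge_zero)

lemma in_cone_height:
  assumes "in_cone u \<delta> x" "0 < \<delta>" "\<delta> \<le> 1"
  shows "0 \<le> inner x u" "norm x \<le> 2 * inner x u"
proof -
  show "0 \<le> inner x u"
    using assms unfolding in_cone_def by (smt (verit) norm_ge_zero mult_pos_neg)
  then have "norm (transversal u x) \<le> inner x u"
    using assms unfolding in_cone_def by (meson order_trans mult_left_le_one_le less_imp_le)
  moreover have "norm x \<le> norm (inner x u *\<^sub>R u) + norm (transversal u x)"
    by (subst transversal_decomp[of x u]) (rule norm_triangle_ineq)
  ultimately show "norm x \<le> 2 * inner x u" using unit \<open>0 \<le> inner x u\<close> by simp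
qed

lemma in_cone_of_close_direction:
  assumes "z \<noteq> 0" "0 < d" "d \<le> 1"
    and close: "norm (z /\<^sub>R norm z - u) < d / 32"
  shows "norm (transversal u z) \<le> (d/8) * inner z u" "0 \<le> inner z u"
proof -
  define v where "v = z /\<^sub>R norm z"
  have z: "z = norm z *\<^sub>R v" unfolding v_def using \<open>z \<noteq> 0\<close> by simp
  have "\<bar>1 - inner v u\<bar> = \<bar>inner (u - v) u\<bar>" using unit by (simp add: inner_diff_left dot_square_norm)
  also have "\<dots> \<le> norm (v - u)"
    using Cauchy_Schwarz_ineq2[of "u - v" u] unit by (simp add: norm_minus_commute)
  finally have height: "\<bar>1 - inner v u\<bar> \<le> norm (v - u)" .
  have "transversal u v = (v - u) + (1 - inner v u) *\<^sub>R u" unfolding transversal_def by (simp add: algebra_simps)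
  then have "norm (transversal u v) \<le> norm (v - u) + \<bar>1 - inner v u\<bar>"
    using norm_triangle_ineq[of "v - u" "(1 - inner v u) *\<^sub>R u"] unit by simp
  also have "\<dots> \<le> d / 16" using height close unfolding v_def by simp
  also have "\<dots> \<le> (d/8) * inner v u"
  proof -
    have "1/2 \<le> inner v u" using height close \<open>d \<le> 1\<close> unfolding v_def by (simp add: abs_le_iff)
    then show ?thesis using \<open>0 < d\<close> mult_left_mono[of "1/2" "inner v u" "d/8"] by simp
  qed
  finally have "norm z * norm (transversal u v) \<le> norm z * ((d/8) * inner v u)"
    by (intro mult_left_mono) auto
  moreover have "transversal u z = norm z *\<^sub>R transversal u v"
    by (subst z) (simp add: transversal_def algebra_simps)
  moreover have "inner z u = norm z * inner v u" by (subst z) simp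
  moreover have "0 \<le> inner v u" using height close \<open>d \<le> 1\<close> unfolding v_def by (simp add: abs_le_iff)
  ultimately show "norm (transversal u z) \<le> (d/8) * inner z u" "0 \<le> inner z u" by (simp_all add: algebra_simps)
qed

end

definition recession_system :: "'a::real_inner \<Rightarrow> ('a \<times> real) set \<Rightarrow> ('a \<times> real) set" where
  "recession_system u S = {(a, b)\<in>S. inner a u = 0}"

definition recession_family :: "'a::real_inner \<Rightarrow> ('a \<times> real) set set \<Rightarrow> ('a \<times> real) set set" where
  "recession_family u F = recession_system u ` {S\<in>F. \<forall>(a, b)\<in>S. inner a u \<le> 0}"

lemma shrunk_square_lower_bound:
  fixes a t z :: real
  assumes "0 \<le> a" "a \<le> 1" "0 \<le> t" "0 \<le> z"
  shows "(1 - a/2) * (t^2 + 2 * t * z) \<le> ((1 - a/4) * (t + z))^2"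
proof -
  have "(1 - a/4)^2 = 1 - a/2 + (a * a) / 16" by (simp add: power2_eq_square algebra_simps)
  then have "1 - a/2 \<le> (1 - a/4)^2" by simp
  then have "(1 - a/2) * (t^2 + 2 * t * z) \<le> (1 - a/4)^2 * (t^2 + 2 * t * z)"
    using assms by (intro mult_right_mono) auto
  also have "\<dots> \<le> (1 - a/4)^2 * (t + z)^2"
  proof (rule mult_left_mono)
    show "t^2 + 2 * t * z \<le> (t + z)^2" using assms by (simp add: power2_eq_square algebra_simps)
  qed simp
  finally show ?thesis by (simp add: power_mult_distrib)
qed

lemma blocked_exit_bound:
  fixes k t q :: real
  assumes k: "0 < k" "k \<le> 1/16" and t: "0 \<le> t" and q: "0 \<le> q" "q \<le> (k/8) * t"
  shows "t^2 + q^2 - 4 * k * t * ((k/8) * t - q) \<le> ((1 - (k * (k/8))/4) * (t + k * q))^2"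
proof -
  define a where "a = k * (k/8)"
  define P where "P = k * t * q"
  have "k * k \<le> 1/256" using mult_mono[of k "1/16" k "1/16"] k by simp
  then have a: "0 \<le> a" "a \<le> 1/16" unfolding a_def using k by auto
  have P0: "0 \<le> P" unfolding P_def using k t q by simp
  have "(1 - a/2) * (t^2 + 2 * t * (k * q)) \<le> ((1 - a/4) * (t + k * q))^2"
    using shrunk_square_lower_bound[of a t "k * q"] a t k q by simp
  moreover have "(1 - a/2) * (t^2 + 2 * t * (k * q)) = t^2 + 2 * P - (a/2) * t^2 - a * P"
    unfolding P_def by (simp add: algebra_simps power2_eq_square)
  moreover have "t^2 + q^2 - 4 * k * t * ((k/8) * t - q) = t^2 + q^2 - 4 * a * t^2 + 4 * P"
    unfolding P_def a_def by (simp add: algebra_simps power2_eq_square)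
  moreover have "q^2 \<le> a * t^2 / 8"
  proof -
    have "q * q \<le> ((k/8) * t) * ((k/8) * t)" using q by (intro mult_mono) auto
    then show ?thesis unfolding a_def by (simp add: power2_eq_square algebra_simps)
  qed
  moreover have Pa: "P \<le> a * t^2"
  proof -
    have "(k * t) * q \<le> (k * t) * ((k/8) * t)" using q k t by (intro mult_left_mono) auto
    then show ?thesis unfolding P_def a_def by (simp add: power2_eq_square algebra_simps)
  qed
  moreover have "a * P \<le> (1/16) * (a * t^2)"
    using mult_mono[OF a(2) Pa] a P0 by simp
  moreover have "0 \<le> a * t^2" using a by simp
  ultimately have "t^2 + q^2 - 4 * k * t * ((k/8) * t - q) \<le> ((1 - a/4) * (t + k * q))^2"
    by linarith
  then show ?thesis unfolding a_def .
qed

lemma receding_exit_bound: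
  fixes k t Y :: real
  assumes k: "0 < k" "k \<le> 1/16" and t: "0 \<le> t" and Y: "(k/8) * t \<le> Y" "Y \<le> k * t / 2"
  shows "t^2 + Y^2 \<le> ((1 - (k * (k/8))/4) * (t + k * Y))^2"
proof -
  define a where "a = k * (k/8)"
  define P where "P = k * t * Y"
  have "k * k \<le> 1/256" using mult_mono[of k "1/16" k "1/16"] k by simp
  then have a: "0 \<le> a" "a \<le> 1" unfolding a_def using k by auto
  have "0 \<le> Y" using Y(1) k t by (meson order_trans zero_le_divide_iff zero_le_mult_iff less_imp_le zero_le_numeral)
  then have "0 \<le> P" unfolding P_def using k t by simp
  have "(1 - a/2) * (t^2 + 2 * t * (k * Y)) \<le> ((1 - a/4) * (t + k * Y))^2"
    using shrunk_square_lower_bound[OF a t] k \<open>0 \<le> Y\<close> by simp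
  moreover have "(1 - a/2) * (t^2 + 2 * t * (k * Y)) = t^2 + 2 * P - (a/2) * t^2 - a * P"
    unfolding P_def by (simp add: algebra_simps power2_eq_square)
  moreover have "Y^2 \<le> P / 2"
    using mult_left_mono[OF Y(2) \<open>0 \<le> Y\<close>] unfolding P_def by (simp add: power2_eq_square algebra_simps)
  moreover have "(a/2) * t^2 \<le> P / 2"
    using mult_left_mono[OF Y(1), of "k/2 * t"] k t unfolding P_def a_def
    by (simp add: power2_eq_square algebra_simps)
  moreover have "a * P \<le> P" using mult_right_mono[of a 1 P] a \<open>0 \<le> P\<close> by simp
  ultimately have "t^2 + Y^2 \<le> ((1 - a/4) * (t + k * Y))^2" by linarith
  then show ?thesis unfolding a_def .
qed

text \<open>Phi is a Lyapunov function for the recession family of u, which the induction on the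
  number of normals provides; g bounds the angle between u and every normal not orthogonal to u.\<close>

locale recession_cone =
  fixes F :: "('a::{real_inner,complete_space} \<times> real) set set"
    and lam M B1 :: real and u :: 'a and g K :: real and Phi :: "'a \<Rightarrow> real"
  assumes feasible: "\<forall>S\<in>F. feasible_set S \<noteq> {}"
    and lam: "0 \<le> lam" "lam < 2"
    and near_origin: "\<forall>S\<in>F. \<exists>c\<in>feasible_set S. norm c \<le> M"
    and offsets: "\<forall>S\<in>F. \<forall>(a, b)\<in>S. a \<noteq> 0 \<longrightarrow> \<bar>b\<bar> \<le> B1 * norm a"
    and unit: "norm u = 1"
    and g: "0 < g" "g \<le> 1/4"
    and angle: "\<forall>S\<in>F. \<forall>(a, b)\<in>S. inner a u \<noteq> 0 \<longrightarrow> 4 * g * norm a \<le> \<bar>inner a u\<bar>"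
    and Phi_ge: "\<And>y. norm y \<le> Phi y"
    and Phi_le: "\<And>y. Phi y \<le> norm y + K"
    and Phi_lipschitz: "\<And>y y'. Phi y \<le> Phi y' + norm (y - y')"
    and Phi_antimono: "\<And>y y'. relax_step (recession_family u F) lam y y' \<Longrightarrow> Phi y' \<le> Phi y"
begin

definition "\<kappa> = (2 - lam) * g / 8"
definition "\<delta> = \<kappa> / 8"
definition "\<alpha> = \<kappa> * \<delta>"
definition "threshold = max 1 (max (B1 / g) (max (2 * M / (g * (2 - lam)))
  (max (2 * M / g) (max ((M + B1) / (3 * g)) (3 * K / \<kappa>)))))"

lemma cone_constants:
  "0 < \<kappa>" "\<kappa> \<le> g/4" "\<kappa> \<le> 1/16" "0 < \<delta>" "\<delta> \<le> g/32" "\<delta> \<le> 1"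
  "0 < \<alpha>" "\<alpha> \<le> 1/1000" "\<alpha> = \<kappa> * (\<kappa>/8)"
proof -
  show "0 < \<kappa>" unfolding \<kappa>_def using lam g by simp
  show "\<kappa> \<le> g/4" unfolding \<kappa>_def using lam g by (simp add: mult_right_mono)
  then show "\<kappa> \<le> 1/16" using g by simp
  show "0 < \<delta>" "\<delta> \<le> g/32" "\<delta> \<le> 1" "0 < \<alpha>" "\<alpha> = \<kappa> * (\<kappa>/8)"
    unfolding \<alpha>_def \<delta>_def using \<open>0 < \<kappa>\<close> \<open>\<kappa> \<le> g/4\<close> \<open>\<kappa> \<le> 1/16\<close> by auto
  have "\<kappa> * \<kappa> \<le> (1/16) * (1/16)"
    using \<open>0 < \<kappa>\<close> \<open>\<kappa> \<le> 1/16\<close> by (intro mult_mono) auto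
  then show "\<alpha> \<le> 1/1000" unfolding \<alpha>_def \<delta>_def by simp
qed

lemma K_nonneg: "0 \<le> K"
  using Phi_ge[of 0] Phi_le[of 0] by simp

lemma threshold_bounds:
  assumes "threshold \<le> t"
  shows "0 < t" "B1 \<le> g * t" "2 * M \<le> g * (2 - lam) * t" "2 * M \<le> g * t"
    "M + B1 \<le> 3 * g * t" "3 * K \<le> \<kappa> * t"
proof -
  have m: "1 \<le> t" "B1 / g \<le> t" "2 * M / (g * (2 - lam)) \<le> t" "2 * M / g \<le> t"
    "(M + B1) / (3 * g) \<le> t" "3 * K / \<kappa> \<le> t"
    using assms unfolding threshold_def by auto
  show "0 < t" using m by simp
  show "B1 \<le> g * t" "2 * M \<le> g * t" "M + B1 \<le> 3 * g * t"
    using m g by (simp_all add: pos_divide_le_eq mult.commute mult.left_commute)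
  show "2 * M \<le> g * (2 - lam) * t"
    using m g lam by (simp add: pos_divide_le_eq mult.commute mult.left_commute)
  show "3 * K \<le> \<kappa> * t" using m cone_constants by (simp add: pos_divide_le_eq mult.commute)
qed

lemma height_le_cone_lyapunov: "inner x u \<le> cone_lyapunov u \<kappa> Phi x"
  unfolding cone_lyapunov_def using cone_constants Phi_ge[of "transversal u x"]
  by (simp add: order_trans[OF norm_ge_zero])

lemma near_axis_cone_lyapunov:
  assumes "norm (transversal u x) \<le> (\<delta>/8) * inner x u" "0 \<le> inner x u"
  shows "in_cone u \<delta> x" "cone_lyapunov u \<kappa> Phi x \<le> (1 + \<alpha>/8) * norm x + \<kappa> * K"
proof -
  have "(\<delta>/8) * inner x u \<le> \<delta> * inner x u" using assms cone_constants by (intro mult_right_mono) auto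
  then show "in_cone u \<delta> x" unfolding in_cone_def using assms by linarith
  have "cone_lyapunov u \<kappa> Phi x \<le> inner x u + \<kappa> * (norm (transversal u x) + K)"
    unfolding cone_lyapunov_def using Phi_le cone_constants by (simp add: mult_left_mono)
  also have "\<dots> \<le> inner x u + \<kappa> * ((\<delta>/8) * inner x u + K)"
    using assms cone_constants by (simp add: mult_left_mono)
  also have "\<dots> = (1 + \<alpha>/8) * inner x u + \<kappa> * K"
    unfolding \<alpha>_def by (simp add: algebra_simps)
  also have "\<dots> \<le> (1 + \<alpha>/8) * norm x + \<kappa> * K"
    using abs_inner_unit_le[OF unit, of x] cone_constants(7) by (intro add_right_mono mult_left_mono) auto
  finally show "cone_lyapunov u \<kappa> Phi x \<le> (1 + \<alpha>/8) * norm x + \<kappa> * K" .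
qed

lemma cone_lyapunov_near_direction:
  assumes "z \<noteq> 0" "norm (z /\<^sub>R norm z - u) < \<delta> / 32"
  shows "in_cone u \<delta> z" "cone_lyapunov u \<kappa> Phi z \<le> (1 + \<alpha>/8) * norm z + \<kappa> * K"
  using near_axis_cone_lyapunov in_cone_of_close_direction[OF unit assms(1) _ _ assms(2)] cone_constants(4,6)
  by auto

lemma norm_le_shrunk_cone_lyapunov:
  assumes "norm x' ^ 2 \<le> ((1 - \<alpha>/4) * w) ^ 2" "0 \<le> w" "w \<le> cone_lyapunov u \<kappa> Phi x"
  shows "norm x' \<le> (1 - \<alpha>/4) * cone_lyapunov u \<kappa> Phi x"
proof -
  have "0 \<le> 1 - \<alpha>/4" using cone_constants by simp
  then have "norm x' \<le> (1 - \<alpha>/4) * w"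
    using assms(1,2) by (simp add: power2_le_iff_abs_le)
  also have "\<dots> \<le> (1 - \<alpha>/4) * cone_lyapunov u \<kappa> Phi x"
    using assms(3) \<open>0 \<le> 1 - \<alpha>/4\<close> by (rule mult_left_mono)
  finally show ?thesis .
qed

text \<open>A system S either blocks u, i.e. has a normal making an acute angle with u, or u is a
  recession direction of its feasible set.\<close>

context
  fixes S a b x
  assumes S: "S \<in> F" and ab: "(a, b) \<in> S" "a \<noteq> 0" "4 * g * norm a \<le> inner a u"
    and x: "in_cone u \<delta> x" "threshold \<le> inner x u"
begin

lemma blocked_residual_large: "2 * g * inner x u \<le> norm (x - proj (feasible_set S) x)"
proof -
  define t where "t = inner x u"
  define p where "p = proj (feasible_set S) x"
  note T = threshold_bounds[OF x(2), folded t_def]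
  have "norm a > 0" using ab(2) by simp
  have "inner a x = t * inner a u + inner a (transversal u x)"
    using transversal_decomp[of x u] unfolding t_def by (metis inner_add_right inner_scaleR_right)
  moreover have "\<bar>inner a (transversal u x)\<bar> \<le> norm a * (\<delta> * t)"
    using Cauchy_Schwarz_ineq2[of a "transversal u x"] x(1) \<open>norm a > 0\<close>
    unfolding in_cone_def t_def by (meson mult_left_mono norm_ge_zero order_trans)
  moreover have "norm a * (\<delta> * t) \<le> norm a * (g * t)"
    using cone_constants T \<open>norm a > 0\<close> by (intro mult_left_mono mult_right_mono) auto
  moreover have "t * (4 * g * norm a) \<le> t * inner a u" using ab(3) T by (intro mult_left_mono) auto
  ultimately have "3 * g * norm a * t \<le> inner a x" by (simp add: abs_le_iff algebra_simps)
  moreover have "inner a p \<le> b"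
    using proj_in[OF feasible_set_closed_convex, of S x] feasible S ab(1)
    unfolding p_def feasible_set_def by auto
  moreover have "\<bar>b\<bar> \<le> B1 * norm a" using offsets S ab by auto
  moreover have "inner a (x - p) \<le> norm a * norm (x - p)"
    using Cauchy_Schwarz_ineq2[of a "x - p"] by simp
  ultimately have "norm a * (3 * g * t - B1) \<le> norm a * norm (x - p)"
    by (simp add: abs_le_iff algebra_simps)
  then have "3 * g * t - B1 \<le> norm (x - p)" using \<open>norm a > 0\<close> by simp
  then show ?thesis using T unfolding t_def p_def by simp
qed

lemma blocked_norm_decrease:
  assumes "0 \<le> \<mu>" "\<mu> \<le> lam"
  defines "x' \<equiv> relax_proj (feasible_set S) \<mu> x"
  shows "norm x' ^ 2 \<le> norm x ^ 2 - 8 * \<kappa> * inner x u * norm (x' - x)"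
proof -
  define t where "t = inner x u"
  define d where "d = norm (x - proj (feasible_set S) x)"
  note T = threshold_bounds[OF x(2), folded t_def]
  obtain c where c: "c \<in> feasible_set S" "norm c \<le> M" using near_origin S by auto
  have d: "2 * g * t \<le> d" using blocked_residual_large unfolding t_def d_def .
  have "(2 - lam) * d \<le> (2 - \<mu>) * d" using assms(2) by (intro mult_right_mono) (auto simp: d_def)
  then have "2 * norm c - (2 - \<mu>) * d \<le> 2 * M - (2 - lam) * d" using c(2) by linarith
  also have "\<dots> \<le> - (2 - lam) * g * t"
    using T(3) mult_left_mono[OF d, of "2 - lam"] lam by (simp add: algebra_simps)
  finally have "\<mu> * d * (2 * norm c - (2 - \<mu>) * d) \<le> \<mu> * d * (- (2 - lam) * g * t)"
    using assms(1) unfolding d_def by (intro mult_left_mono) auto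
  also have "\<dots> = - 8 * \<kappa> * t * (\<mu> * d)" unfolding \<kappa>_def by (simp add: algebra_simps)
  finally show ?thesis
    using norm_relax_proj_sq_le[OF feasible_set_closed_convex _ c(1) assms(1), of x] feasible S
    unfolding x'_def relax_proj_minus t_def d_def using assms(1) by (simp add: norm_minus_commute)
qed

lemma blocked_height_decrease:
  assumes "0 \<le> \<mu>"
  defines "x' \<equiv> relax_proj (feasible_set S) \<mu> x"
  shows "inner x' u \<le> inner x u - g * norm (x' - x)"
proof -
  define t where "t = inner x u"
  define p where "p = proj (feasible_set S) x"
  define d where "d = norm (x - p)"
  note T = threshold_bounds[OF x(2), folded t_def]
  note C = feasible_set_closed_convex feasible[rule_format, OF S]
  obtain c where c: "c \<in> feasible_set S" "norm c \<le> M" using near_origin S by auto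
  have "2 * g * t \<le> d" using blocked_residual_large unfolding t_def d_def p_def .
  have "inner (x - p) x \<ge> d^2 - d * M"
    using inner_residual_ge[OF C c(1), of x] mult_left_mono[OF c(2), of d]
    unfolding d_def p_def by simp
  moreover have "inner (x - p) x = t * inner (x - p) u + inner (x - p) (transversal u x)"
    using transversal_decomp[of x u] unfolding t_def by (metis inner_add_right inner_scaleR_right)
  moreover have "inner (x - p) (transversal u x) \<le> d * (\<delta> * t)"
    using Cauchy_Schwarz_ineq2[of "x - p" "transversal u x"] x(1) unfolding d_def in_cone_def t_def
    by (meson abs_le_iff mult_left_mono norm_ge_zero order_trans)
  moreover have "d * (g * t) \<le> d * (d - M - \<delta> * t)"
  proof (rule mult_left_mono)
    have "\<delta> * t \<le> (g/32) * t" using cone_constants T by (intro mult_right_mono) auto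
    then have "\<delta> * t \<le> (g * t) / 32" by simp
    moreover have "0 \<le> g * t" using g T by simp
    ultimately show "g * t \<le> d - M - \<delta> * t" using T \<open>2 * g * t \<le> d\<close> by linarith
  qed (simp add: d_def)
  ultimately have "t * (g * d) \<le> t * inner (x - p) u" by (simp add: power2_eq_square algebra_simps)
  then have "g * d \<le> inner (x - p) u" using T by simp
  then have "\<mu> * (g * d) \<le> \<mu> * inner (x - p) u" using assms by (intro mult_left_mono)
  moreover have "inner x' u = t - \<mu> * inner (x - p) u"
    unfolding x'_def relax_proj_def t_def p_def by (simp add: algebra_simps)
  ultimately have "inner x' u \<le> t - \<mu> * (g * d)" by linarith
  moreover have "norm (x' - x) = \<mu> * d"
    unfolding x'_def relax_proj_minus d_def p_def using assms by (simp add: norm_minus_commute)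
  ultimately show ?thesis unfolding t_def by (simp add: algebra_simps)
qed

lemma blocked_lyapunov_decrease:
  assumes "0 \<le> \<mu>" "\<mu> \<le> lam"
  defines "x' \<equiv> relax_proj (feasible_set S) \<mu> x"
  shows "cone_lyapunov u \<kappa> Phi x' \<le> cone_lyapunov u \<kappa> Phi x"
proof -
  define s where "s = norm (x' - x)"
  have "norm (transversal u x' - transversal u x) \<le> s"
    unfolding transversal_diff s_def by (rule norm_transversal_le[OF unit])
  then have "Phi (transversal u x') \<le> Phi (transversal u x) + s"
    using Phi_lipschitz[of "transversal u x'" "transversal u x"] by linarith
  then have "\<kappa> * Phi (transversal u x') \<le> \<kappa> * (Phi (transversal u x) + s)"
    using cone_constants by (intro mult_left_mono) auto
  moreover have "inner x' u \<le> inner x u - g * s"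
    using blocked_height_decrease[OF assms(1)] unfolding x'_def s_def .
  moreover have "\<kappa> * s \<le> g * s" using cone_constants g unfolding s_def by (intro mult_right_mono) auto
  ultimately show ?thesis unfolding cone_lyapunov_def by (simp add: algebra_simps)
qed

lemma blocked_exit:
  assumes "0 \<le> \<mu>" "\<mu> \<le> lam"
  defines "x' \<equiv> relax_proj (feasible_set S) \<mu> x"
  assumes "\<not> in_cone u \<delta> x'"
  shows "norm x' \<le> (1 - \<alpha>/4) * cone_lyapunov u \<kappa> Phi x"
proof -
  define t where "t = inner x u"
  define q where "q = norm (transversal u x)"
  define s where "s = norm (x' - x)"
  note T = threshold_bounds[OF x(2), folded t_def]
  have "\<delta> * inner x' u < norm (transversal u x')" using assms(4) unfolding in_cone_def by simp
  moreover have "t - s \<le> inner x' u"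
    using abs_inner_unit_le[OF unit, of "x' - x"] unfolding t_def s_def by (simp add: inner_diff_left)
  then have "\<delta> * (t - s) \<le> \<delta> * inner x' u" using cone_constants by (intro mult_left_mono) auto
  moreover have "norm (transversal u x' - transversal u x) \<le> s"
    unfolding transversal_diff s_def by (rule norm_transversal_le[OF unit])
  then have "norm (transversal u x') \<le> q + s"
    using norm_triangle_sub[of "transversal u x'" "transversal u x"] unfolding q_def by linarith
  ultimately have "\<delta> * t - q \<le> s * (1 + \<delta>)" by (simp add: algebra_simps)
  also have "\<dots> \<le> s * 2" using cone_constants unfolding s_def by (intro mult_left_mono) auto
  finally have "4 * \<kappa> * t * (\<delta> * t - q) \<le> 4 * \<kappa> * t * (2 * s)"
    using cone_constants T by (intro mult_left_mono) auto
  then have "norm x' ^ 2 \<le> t^2 + q^2 - 4 * \<kappa> * t * (\<delta> * t - q)"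
    using blocked_norm_decrease[OF assms(1,2)] norm_sq_transversal[OF unit, of x]
    unfolding x'_def[symmetric] t_def q_def s_def by (simp add: algebra_simps)
  also have "\<dots> \<le> ((1 - \<alpha>/4) * (t + \<kappa> * q))^2"
    using blocked_exit_bound[of \<kappa> t q] x(1) cone_constants(1,3) T(1)
    unfolding cone_constants(9) in_cone_def t_def q_def \<delta>_def by simp
  finally have "norm x' ^ 2 \<le> ((1 - \<alpha>/4) * (t + \<kappa> * q))^2" .
  moreover have "\<kappa> * q \<le> \<kappa> * Phi (transversal u x)"
    using Phi_ge cone_constants unfolding q_def by (intro mult_left_mono) auto
  moreover have "0 \<le> t + \<kappa> * q" using cone_constants T unfolding q_def by simp
  ultimately show ?thesis
    by (intro norm_le_shrunk_cone_lyapunov) (auto simp: cone_lyapunov_def t_def)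
qed

lemma cone_step_blocked:
  assumes "0 \<le> \<mu>" "\<mu> \<le> lam"
  defines "x' \<equiv> relax_proj (feasible_set S) \<mu> x"
  shows "(in_cone u \<delta> x' \<and> cone_lyapunov u \<kappa> Phi x' \<le> cone_lyapunov u \<kappa> Phi x)
    \<or> norm x' \<le> (1 - \<alpha>/4) * cone_lyapunov u \<kappa> Phi x"
  using blocked_lyapunov_decrease[OF assms(1,2)] blocked_exit[OF assms(1,2)] unfolding x'_def by blast

end

context
  fixes S x
  assumes S: "S \<in> F" and receding: "\<forall>(a, b)\<in>S. inner a u \<le> 0"
    and x: "in_cone u \<delta> x" "threshold \<le> inner x u"
begin

lemma feasible_recession_system: "feasible_set S \<subseteq> feasible_set (recession_system u S)"
  unfolding recession_system_def by (rule feasible_set_antimono) auto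

lemma recession_system_orthogonal: "\<forall>(a, b)\<in>recession_system u S. inner a (r *\<^sub>R u) = 0"
  unfolding recession_system_def by auto

lemma receding_proj_close:
  "norm (proj (feasible_set (recession_system u S)) x - x) \<le> \<delta> * inner x u + M"
proof -
  define t where "t = inner x u"
  obtain c where c: "c \<in> feasible_set S" "norm c \<le> M" using near_origin S by auto
  then have "c + t *\<^sub>R u \<in> feasible_set (recession_system u S)"
    using feasible_set_translate[OF recession_system_orthogonal] feasible_recession_system by blast
  then have "dist x (proj (feasible_set (recession_system u S)) x) \<le> dist x (c + t *\<^sub>R u)"
    using feasible_recession_system c(1) by (intro dist_proj_le feasible_set_closed_convex) auto
  also have "\<dots> = norm (transversal u x - c)"
    unfolding dist_norm t_def transversal_def by (simp add: algebra_simps)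
  also have "\<dots> \<le> \<delta> * t + M"
    using norm_triangle_ineq4[of "transversal u x" c] x(1) c(2) unfolding in_cone_def t_def by linarith
  finally show ?thesis unfolding t_def by (simp add: dist_norm norm_minus_commute)
qed

lemma receding_proj_feasible: "proj (feasible_set (recession_system u S)) x \<in> feasible_set S"
proof -
  define t where "t = inner x u"
  define p where "p = proj (feasible_set (recession_system u S)) x"
  note T = threshold_bounds[OF x(2), folded t_def]
  have "inner a p \<le> b" if ab: "(a, b) \<in> S" for a b
  proof (cases "inner a u = 0")
    case True
    then have "(a, b) \<in> recession_system u S" using ab unfolding recession_system_def by auto
    moreover have "p \<in> feasible_set (recession_system u S)"
      using feasible_recession_system feasible S unfolding p_def
      by (intro proj_in feasible_set_closed_convex) auto
    ultimately show ?thesis unfolding feasible_set_def by auto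
  next
    case False
    then have "inner a u < 0" using receding ab by fastforce
    then have "4 * g * norm a \<le> - inner a u" "\<bar>b\<bar> \<le> B1 * norm a"
      using angle offsets S ab by fastforce+
    have "inner a p = t * inner a u + inner a (transversal u x) + inner a (p - x)"
      using transversal_decomp[of x u] unfolding t_def
      by (metis add_diff_cancel_left' diff_add_cancel inner_add_right inner_scaleR_right)
    also have "\<dots> \<le> t * inner a u + norm a * (\<delta> * t) + norm a * (\<delta> * t + M)"
      using Cauchy_Schwarz_ineq2[of a "transversal u x"] Cauchy_Schwarz_ineq2[of a "p - x"]
        x(1) receding_proj_close mult_left_mono[of _ _ "norm a"]
      unfolding in_cone_def t_def p_def by (smt (verit) norm_ge_zero)
    also have "\<dots> \<le> norm a * (2 * \<delta> * t + M - 4 * g * t)"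
      using mult_left_mono[OF \<open>4 * g * norm a \<le> - inner a u\<close>, of t] T by (simp add: algebra_simps)
    also have "\<dots> \<le> norm a * (- B1)"
    proof (intro mult_left_mono)
      have "\<delta> * t \<le> (g/32) * t" using cone_constants T by (intro mult_right_mono) auto
      then have "\<delta> * t \<le> (g * t) / 32" by simp
      moreover have "0 \<le> g * t" using g T by simp
      ultimately show "2 * \<delta> * t + M - 4 * g * t \<le> - B1" using T by linarith
    qed simp
    also have "\<dots> \<le> b" using \<open>\<bar>b\<bar> \<le> B1 * norm a\<close> by (simp add: abs_le_iff mult.commute)
    finally show ?thesis .
  qed
  then show ?thesis unfolding feasible_set_def p_def by auto
qed

lemma receding_proj_eq:
  "proj (feasible_set S) x = proj (feasible_set (recession_system u S)) x"
proof (rule proj_eqI[OF convex_feasible_set receding_proj_feasible], intro ballI)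
  fix y assume "y \<in> feasible_set S"
  then show "dist x (proj (feasible_set (recession_system u S)) x) \<le> dist x y"
    using feasible_recession_system by (intro dist_proj_le feasible_set_closed_convex) auto
qed

lemma receding_step:
  fixes \<mu> :: real
  defines "x' \<equiv> relax_proj (feasible_set S) \<mu> x"
  shows "inner x' u = inner x u"
    and "transversal u x' = relax_proj (feasible_set (recession_system u S)) \<mu> (transversal u x)"
proof -
  define t where "t = inner x u"
  have ne: "feasible_set (recession_system u S) \<noteq> {}"
    using feasible S feasible_recession_system by blast
  have x': "x' = relax_proj (feasible_set (recession_system u S)) \<mu> x"
    unfolding x'_def relax_proj_def receding_proj_eq ..
  have "inner (x - proj (feasible_set (recession_system u S)) x) u = 0"
    using proj_feasible_set_residual_orthogonal[OF ne recession_system_orthogonal[of 1]] by simp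
  then show "inner x' u = inner x u"
    unfolding x' relax_proj_def by (simp add: algebra_simps)
  have "x' = relax_proj (feasible_set (recession_system u S)) \<mu> (transversal u x + t *\<^sub>R u)"
    unfolding x' t_def using transversal_decomp[of x u] by (simp add: add.commute)
  also have "\<dots> = relax_proj (feasible_set (recession_system u S)) \<mu> (transversal u x) + t *\<^sub>R u"
    by (rule relax_proj_feasible_set_translate[OF ne recession_system_orthogonal])
  finally show "transversal u x' = relax_proj (feasible_set (recession_system u S)) \<mu> (transversal u x)"
    using \<open>inner x' u = inner x u\<close> unfolding transversal_def t_def by simp
qed

lemma receding_Phi_decrease:
  assumes "0 \<le> \<mu>" "\<mu> \<le> lam"
  defines "x' \<equiv> relax_proj (feasible_set S) \<mu> x"
  shows "Phi (transversal u x') \<le> Phi (transversal u x)"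
proof (rule Phi_antimono)
  have "recession_system u S \<in> recession_family u F"
    unfolding recession_family_def using S receding by blast
  then show "relax_step (recession_family u F) lam (transversal u x) (transversal u x')"
    unfolding relax_step_def x'_def receding_step using assms(1,2)
    by (intro bexI[of _ "recession_system u S"] bexI[of _ \<mu>]) auto
qed

lemma receding_exit:
  assumes "0 \<le> \<mu>" "\<mu> \<le> lam"
  defines "x' \<equiv> relax_proj (feasible_set S) \<mu> x"
  assumes "\<not> in_cone u \<delta> x'"
  shows "norm x' \<le> (1 - \<alpha>/4) * cone_lyapunov u \<kappa> Phi x"
proof -
  define t where "t = inner x u"
  define Y where "Y = norm (transversal u x')"
  note T = threshold_bounds[OF x(2), folded t_def]
  have height_x': "inner x' u = t" unfolding x'_def t_def by (rule receding_step)
  have "(\<kappa>/8) * t \<le> Y" using assms(4) unfolding in_cone_def Y_def height_x' \<delta>_def by simp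
  have "Y \<le> Phi (transversal u x)"
    using Phi_ge[of "transversal u x'"] receding_Phi_decrease[OF assms(1,2)] unfolding Y_def x'_def by simp
  also have "\<dots> \<le> norm (transversal u x) + K" by (rule Phi_le)
  also have "\<dots> \<le> \<kappa> * t / 2"
  proof -
    have "0 \<le> \<kappa> * t" using cone_constants T by simp
    then show ?thesis using x(1) T unfolding in_cone_def t_def \<delta>_def by simp
  qed
  finally have "Y \<le> \<kappa> * t / 2" .
  have "norm x' ^ 2 = t^2 + Y^2"
    using norm_sq_transversal[OF unit, of x'] unfolding height_x' Y_def .
  also have "\<dots> \<le> ((1 - \<alpha>/4) * (t + \<kappa> * Y))^2"
    using receding_exit_bound[OF cone_constants(1,3) _ \<open>(\<kappa>/8) * t \<le> Y\<close> \<open>Y \<le> \<kappa> * t / 2\<close>] T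
    unfolding cone_constants(9) by simp
  finally have "norm x' ^ 2 \<le> ((1 - \<alpha>/4) * (t + \<kappa> * Y))^2" .
  moreover have "\<kappa> * Y \<le> \<kappa> * Phi (transversal u x)"
    using \<open>Y \<le> Phi (transversal u x)\<close> cone_constants by (intro mult_left_mono) auto
  moreover have "0 \<le> t + \<kappa> * Y" using cone_constants T unfolding Y_def by simp
  ultimately show ?thesis
    by (intro norm_le_shrunk_cone_lyapunov) (auto simp: cone_lyapunov_def t_def)
qed

lemma cone_step_receding:
  assumes "0 \<le> \<mu>" "\<mu> \<le> lam"
  defines "x' \<equiv> relax_proj (feasible_set S) \<mu> x"
  shows "(in_cone u \<delta> x' \<and> cone_lyapunov u \<kappa> Phi x' \<le> cone_lyapunov u \<kappa> Phi x)
    \<or> norm x' \<le> (1 - \<alpha>/4) * cone_lyapunov u \<kappa> Phi x"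
proof -
  have "cone_lyapunov u \<kappa> Phi x' \<le> cone_lyapunov u \<kappa> Phi x"
    using receding_Phi_decrease[OF assms(1,2)] receding_step(1)[of \<mu>] cone_constants(1)
    unfolding cone_lyapunov_def x'_def by (simp add: mult_left_mono)
  then show ?thesis using receding_exit[OF assms(1,2)] unfolding x'_def by blast
qed

end

lemma cone_step:
  assumes "S \<in> F" "in_cone u \<delta> x" "threshold \<le> inner x u" "0 \<le> \<mu>" "\<mu> \<le> lam"
  defines "x' \<equiv> relax_proj (feasible_set S) \<mu> x"
  shows "(in_cone u \<delta> x' \<and> cone_lyapunov u \<kappa> Phi x' \<le> cone_lyapunov u \<kappa> Phi x)
    \<or> norm x' \<le> (1 - \<alpha>/4) * cone_lyapunov u \<kappa> Phi x"
proof (cases "\<forall>(a, b)\<in>S. inner a u \<le> 0")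
  case True
  show ?thesis unfolding x'_def using assms(1) True assms(2-5) by (rule cone_step_receding)
next
  case False
  then obtain a b where ab: "(a, b) \<in> S" "0 < inner a u" by auto
  then have "4 * g * norm a \<le> inner a u" "a \<noteq> 0" using angle assms(1) by fastforce+
  then show ?thesis unfolding x'_def using assms ab by (intro cone_step_blocked) auto
qed

lemma norm_le_cone_lyapunov: "in_cone u \<delta> x \<Longrightarrow> norm x \<le> 2 * cone_lyapunov u \<kappa> Phi x"
  using in_cone_height[OF unit _ cone_constants(4,6)] height_le_cone_lyapunov[of x] by fastforce

lemma cone_relax_step:
  assumes "in_cone u \<delta> x" "2 * threshold \<le> norm x" "relax_step F lam x x'"
  shows "(in_cone u \<delta> x' \<and> cone_lyapunov u \<kappa> Phi x' \<le> cone_lyapunov u \<kappa> Phi x)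
    \<or> norm x' \<le> (1 - \<alpha>/4) * cone_lyapunov u \<kappa> Phi x"
proof -
  have "threshold \<le> inner x u" using in_cone_height[OF unit assms(1) cone_constants(4,6)] assms(2) by simp
  moreover obtain S \<mu> where "S \<in> F" "0 \<le> \<mu>" "\<mu> \<le> lam" "x' = relax_proj (feasible_set S) \<mu> x"
    using assms(3) unfolding relax_step_def by auto
  ultimately show ?thesis using assms(1) cone_step by blast
qed

end

section \<open>Gluing Lyapunov functions of finitely many cones\<close>

lemma exit_norm_le:
  fixes a K w B n :: real
  assumes "0 < a" "a \<le> 1" "0 \<le> n" "16 * K \<le> a * w" "w \<le> (1 + a/8) * B" "n \<le> (1 - a/4) * w"
  shows "n + K \<le> B"
proof -
  have "0 < 1 - a/4" "0 < 1 + a/8" using assms(1,2) by auto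
  have "0 \<le> (1 - a/4) * w" using assms(3,6) by linarith
  then have "0 \<le> w" using \<open>0 < 1 - a/4\<close> by (simp add: zero_le_mult_iff)
  then have "0 \<le> (1 + a/8) * B" using assms(5) by linarith
  then have "0 \<le> B" using \<open>0 < 1 + a/8\<close> by (simp add: zero_le_mult_iff)
  have "0 \<le> a * w" using assms(1) \<open>0 \<le> w\<close> by simp
  then have "n + K \<le> (1 - a/8) * w" using assms(4,6) by (simp add: algebra_simps)
  also have "\<dots> \<le> (1 - a/8) * ((1 + a/8) * B)" using assms(1,2,5) by (intro mult_left_mono) auto
  also have "\<dots> = B - (a/8)^2 * B" by (simp add: field_simps power2_eq_square)
  also have "\<dots> \<le> B" using \<open>0 \<le> B\<close> by simp
  finally show ?thesis .
qed

locale lyapunov_cone_cover =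
  fixes step :: "'a::real_normed_vector \<Rightarrow> 'a \<Rightarrow> bool" and V :: "'a set"
    and D :: "'b set" and U :: "'b \<Rightarrow> 'a \<Rightarrow> bool" and W :: "'b \<Rightarrow> 'a \<Rightarrow> real"
    and \<alpha> T :: "'b \<Rightarrow> real" and R M K :: real
  assumes finite_D: "finite D"
    and zero_in_V: "0 \<in> V" and step_V: "\<And>z z'. z \<in> V \<Longrightarrow> step z z' \<Longrightarrow> z' \<in> V"
    and step_norm: "\<And>z z'. step z z' \<Longrightarrow> norm z' \<le> 3 * norm z + M"
    and \<alpha>: "\<And>u. u \<in> D \<Longrightarrow> 0 < \<alpha> u" "\<And>u. u \<in> D \<Longrightarrow> \<alpha> u \<le> 1"
    and cone_norm: "\<And>u z. u \<in> D \<Longrightarrow> U u z \<Longrightarrow> norm z \<le> 2 * W u z"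
    and cone_step: "\<And>u z z'. u \<in> D \<Longrightarrow> U u z \<Longrightarrow> T u \<le> norm z \<Longrightarrow> step z z' \<Longrightarrow>
      (U u z' \<and> W u z' \<le> W u z) \<or> norm z' \<le> (1 - \<alpha> u / 4) * W u z"
    and cover: "\<And>z. z \<in> V \<Longrightarrow> R \<le> norm z \<Longrightarrow> \<exists>u\<in>D. U u z \<and> W u z \<le> (1 + \<alpha> u / 8) * (norm z + K)"
    and K: "0 \<le> K"
begin

definition "\<rho> = max 0 R + (\<Sum>u\<in>D. \<bar>T u\<bar> + 32 * K / \<alpha> u)"
definition "B = 3 * \<rho> + M + K"
text \<open>The factor 1 + alpha/8 in good absorbs the additive error of the cover when the orbit
  leaves a cone (see exit_norm_le).\<close>

definition "good z \<longleftrightarrow> norm z \<le> \<rho> \<or> (\<exists>u\<in>D. U u z \<and> W u z \<le> (1 + \<alpha> u / 8) * B)"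

lemma \<rho>_bounds:
  shows "0 \<le> \<rho>" "R \<le> \<rho>" "u \<in> D \<Longrightarrow> T u \<le> \<rho>" "u \<in> D \<Longrightarrow> 32 * K / \<alpha> u \<le> \<rho>"
proof -
  have nonneg: "0 \<le> \<bar>T u\<bar> + 32 * K / \<alpha> u" if "u \<in> D" for u
    using \<alpha>(1)[OF that] K by simp
  then have "0 \<le> (\<Sum>u\<in>D. \<bar>T u\<bar> + 32 * K / \<alpha> u)" by (rule sum_nonneg)
  then show "0 \<le> \<rho>" "R \<le> \<rho>" unfolding \<rho>_def by auto
  assume "u \<in> D"
  then have "\<bar>T u\<bar> + 32 * K / \<alpha> u \<le> (\<Sum>u\<in>D. \<bar>T u\<bar> + 32 * K / \<alpha> u)"
    using finite_D nonneg by (intro member_le_sum) auto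
  moreover have "0 \<le> 32 * K / \<alpha> u" using \<alpha>(1)[OF \<open>u \<in> D\<close>] K by simp
  ultimately show "T u \<le> \<rho>" "32 * K / \<alpha> u \<le> \<rho>"
    unfolding \<rho>_def using abs_ge_self[of "T u"] max.cobounded1[of 0 R] by linarith+
qed

lemma good_if_small: "z \<in> V \<Longrightarrow> norm z + K \<le> B \<Longrightarrow> good z"
proof -
  assume "z \<in> V" "norm z + K \<le> B"
  show "good z"
  proof (cases "norm z \<le> \<rho>")
    case False
    then obtain u where "u \<in> D" "U u z" "W u z \<le> (1 + \<alpha> u / 8) * (norm z + K)"
      using cover[OF \<open>z \<in> V\<close>] \<rho>_bounds(2) by fastforce
    moreover have "(1 + \<alpha> u / 8) * (norm z + K) \<le> (1 + \<alpha> u / 8) * B"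
      using \<open>norm z + K \<le> B\<close> \<alpha>(1)[OF \<open>u \<in> D\<close>] by (intro mult_left_mono) auto
    ultimately show ?thesis unfolding good_def by fastforce
  qed (simp add: good_def)
qed

lemma good_step_from_ball:
  assumes "z \<in> V" "norm z \<le> \<rho>" "step z z'"
  shows "good z'"
  using step_norm[OF assms(3)] assms(2) by (intro good_if_small step_V[OF assms(1,3)]) (simp add: B_def)

lemma good_step_from_cone:
  assumes "z \<in> V" "u \<in> D" "U u z" "W u z \<le> (1 + \<alpha> u / 8) * B" "\<rho> < norm z" "step z z'"
  shows "good z'"
proof -
  have "T u \<le> norm z" using \<rho>_bounds(3)[OF assms(2)] assms(5) by simp
  from cone_step[OF assms(2,3) this assms(6)] consider
    "U u z'" "W u z' \<le> W u z" | "norm z' \<le> (1 - \<alpha> u / 4) * W u z" by blast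
  then show ?thesis
  proof cases
    case 1
    then show ?thesis using assms(2,4) unfolding good_def by auto
  next
    case 2
    have "32 * K / \<alpha> u \<le> 2 * W u z"
      using \<rho>_bounds(4)[OF assms(2)] assms(5) cone_norm[OF assms(2,3)] by simp
    then have "16 * K \<le> \<alpha> u * W u z" using \<alpha>(1)[OF assms(2)] by (simp add: divide_le_eq algebra_simps)
    with 2 have "norm z' + K \<le> B" using \<alpha>[OF assms(2)] assms(4) by (intro exit_norm_le) auto
    then show ?thesis using step_V[OF assms(1,6)] by (rule good_if_small[rotated])
  qed
qed

lemma good_step: "z \<in> V \<Longrightarrow> good z \<Longrightarrow> step z z' \<Longrightarrow> good z'"
  using good_step_from_ball good_step_from_cone unfolding good_def[of z] by (meson not_le)

lemma norm_le_if_good: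
  assumes "good z"
  shows "norm z \<le> max \<rho> (3 * B)"
  using assms unfolding good_def
proof (elim disjE bexE conjE)
  fix u assume "u \<in> D" "U u z" "W u z \<le> (1 + \<alpha> u / 8) * B"
  then have "norm z \<le> 2 * ((1 + \<alpha> u / 8) * B)" using cone_norm by fastforce
  then have "0 \<le> (1 + \<alpha> u / 8) * B" using norm_ge_zero[of z] by linarith
  then have "0 \<le> B" using \<alpha>(1)[OF \<open>u \<in> D\<close>] by (simp add: zero_le_mult_iff)
  then have "(1 + \<alpha> u / 8) * B \<le> (9/8) * B" using \<alpha>(2)[OF \<open>u \<in> D\<close>] by (intro mult_right_mono) auto
  then show ?thesis using \<open>norm z \<le> 2 * ((1 + \<alpha> u / 8) * B)\<close> \<open>0 \<le> B\<close> by linarith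
qed simp

lemma orbit_bounded: "\<exists>C. \<forall>z. step\<^sup>*\<^sup>* 0 z \<longrightarrow> norm z \<le> C"
proof -
  have "z \<in> V \<and> good z" if "step\<^sup>*\<^sup>* 0 z" for z
    using that
  proof (induction rule: rtranclp_induct)
    case base
    then show ?case using zero_in_V \<rho>_bounds(1) unfolding good_def by simp
  next
    case (step y z)
    then show ?case using step_V good_step by blast
  qed
  then show ?thesis using norm_le_if_good by blast
qed

end

section \<open>Bounded orbits of relaxed projections\<close>

definition normals :: "('a \<times> real) set set \<Rightarrow> 'a set" where
  "normals F = fst ` \<Union>F"

lemma finite_recession_family: "finite F \<Longrightarrow> finite (recession_family u F)"
  unfolding recession_family_def by simp

lemma recession_family_systems:
  assumes "\<forall>S\<in>F. finite S \<and> feasible_set S \<noteq> {}"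
  shows "\<forall>S\<in>recession_family u F. finite S \<and> feasible_set S \<noteq> {}"
proof
  fix S' assume "S' \<in> recession_family u F"
  then obtain S where "S \<in> F" "S' = recession_system u S" unfolding recession_family_def by auto
  moreover have "recession_system u S \<subseteq> S" unfolding recession_system_def by auto
  ultimately show "finite S' \<and> feasible_set S' \<noteq> {}"
    using assms feasible_set_antimono by (metis finite_subset subset_empty)
qed

lemma card_normals_recession_family_less:
  assumes "finite (normals F)" "u \<in> span (normals F)" "u \<noteq> 0"
  shows "card (normals (recession_family u F)) < card (normals F)"
proof (rule psubset_card_mono[OF assms(1)])
  have "normals (recession_family u F) \<subseteq> {a \<in> normals F. inner a u = 0}"
    unfolding normals_def recession_family_def recession_system_def by force
  moreover have "\<exists>a\<in>normals F. inner a u \<noteq> 0"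
  proof (rule ccontr)
    assume "\<not> ?thesis"
    then have "orthogonal u u"
      using orthogonal_to_span[OF assms(2), of u] by (simp add: orthogonal_def inner_commute)
    then show False using assms(3) by (simp add: orthogonal_def)
  qed
  ultimately show "normals (recession_family u F) \<subset> normals F" by blast
qed

lemma exists_angle_bound:
  fixes A :: "'a::real_inner set"
  assumes "finite A"
  shows "\<exists>g>0. g \<le> 1/4 \<and> (\<forall>a\<in>A. inner a u \<noteq> 0 \<longrightarrow> 4 * g * norm a \<le> \<bar>inner a u\<bar>)"
proof -
  define Q where "Q = insert (1/4) ((\<lambda>a. \<bar>inner a u\<bar> / (4 * norm a)) ` {a\<in>A. inner a u \<noteq> 0})"
  have Q: "finite Q" "Q \<noteq> {}" "\<forall>q\<in>Q. 0 < q" unfolding Q_def using assms by (auto intro!: divide_pos_pos)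
  have "4 * Min Q * norm a \<le> \<bar>inner a u\<bar>" if "a \<in> A" "inner a u \<noteq> 0" for a
  proof -
    have "0 < norm a" using that(2) by auto
    moreover have "Min Q \<le> \<bar>inner a u\<bar> / (4 * norm a)" using Q that unfolding Q_def by (intro Min_le) auto
    ultimately show ?thesis by (simp add: pos_le_divide_eq mult.commute mult.left_commute)
  qed
  moreover have "0 < Min Q" using Q by simp
  moreover have "Min Q \<le> 1/4" using Q(1) unfolding Q_def by (intro Min_le) auto
  ultimately show ?thesis by blast
qed

lemma finite_sets_meet_common_ball:
  fixes \<C> :: "'a::real_normed_vector set set"
  assumes "finite \<C>" "\<forall>C\<in>\<C>. C \<noteq> {}"
  shows "\<exists>M. \<forall>C\<in>\<C>. \<exists>c\<in>C. norm c \<le> M"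
proof -
  obtain f where f: "\<forall>C\<in>\<C>. f C \<in> C" using assms(2) by (metis all_not_in_conv)
  have "norm (f C) \<le> (\<Sum>C\<in>\<C>. norm (f C))" if "C \<in> \<C>" for C
    using assms(1) that by (intro member_le_sum) auto
  then show ?thesis using f by blast
qed

lemma exists_offset_bound:
  fixes P :: "('a::real_normed_vector \<times> real) set"
  assumes "finite P"
  shows "\<exists>B1. \<forall>(a, b)\<in>P. a \<noteq> 0 \<longrightarrow> \<bar>b\<bar> \<le> B1 * norm a"
proof -
  define B1 where "B1 = (\<Sum>(a, b)\<in>P. \<bar>b\<bar> / norm a)"
  have "\<bar>b\<bar> \<le> B1 * norm a" if "(a, b) \<in> P" "a \<noteq> 0" for a b
  proof -
    have "\<bar>b\<bar> / norm a \<le> B1"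
      unfolding B1_def using assms that by (intro member_le_sum[of "(a, b)" P "\<lambda>(a, b). \<bar>b\<bar> / norm a", simplified]) auto
    then show ?thesis using that(2) by (simp add: pos_divide_le_eq)
  qed
  then show ?thesis by blast
qed

lemma relax_step_norm_le:
  fixes F :: "('a::{real_inner,complete_space} \<times> real) set set"
  assumes "\<forall>S\<in>F. \<exists>c\<in>feasible_set S. norm c \<le> M" "lam \<le> 2" "relax_step F lam z z'"
  shows "norm z' \<le> 3 * norm z + 2 * M"
proof -
  obtain S \<mu> where S: "S \<in> F" "0 \<le> \<mu>" "\<mu> \<le> lam" "z' = relax_proj (feasible_set S) \<mu> z"
    using assms(3) unfolding relax_step_def by auto
  obtain c where c: "c \<in> feasible_set S" "norm c \<le> M" using assms(1) S(1) by blast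
  note C = feasible_set_closed_convex ex_in_conv[THEN iffD1, OF exI, OF c(1)]
  have "norm (z' - z) = \<mu> * norm (proj (feasible_set S) z - z)"
    unfolding S(4) relax_proj_minus using S(2) by simp
  also have "\<dots> \<le> 2 * norm (z - c)"
    using dist_proj_le[OF C c(1), of z] S(2,3) assms(2)
    by (intro mult_mono) (auto simp: dist_norm norm_minus_commute)
  also have "\<dots> \<le> 2 * (norm z + M)" using norm_triangle_ineq4[of z c] c(2) by simp
  finally show ?thesis using norm_triangle_sub[of z' z] by simp
qed

lemma relax_step_in_span:
  fixes F :: "('a::{real_inner,complete_space} \<times> real) set set"
  assumes "finite E" "orthonormal E" "normals F \<subseteq> span E" "\<forall>S\<in>F. feasible_set S \<noteq> {}"
    and "z \<in> span E" "relax_step F lam z z'"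
  shows "z' \<in> span E"
proof -
  obtain S \<mu> where S: "S \<in> F" "z' = relax_proj (feasible_set S) \<mu> z"
    using assms(6) unfolding relax_step_def by auto
  have "\<forall>(a, b)\<in>S. a \<in> span E" using assms(3) S(1) unfolding normals_def by force
  then have "proj (feasible_set S) z \<in> span E"
    using assms S(1) by (intro proj_feasible_set_in_span) auto
  then show ?thesis unfolding S(2) relax_proj_def using assms(5) by (intro span_add span_scale)
qed

lemma recession_cone_instance:
  fixes F :: "('a::{real_inner,complete_space} \<times> real) set set"
  assumes feasible: "\<forall>S\<in>F. feasible_set S \<noteq> {}" and lam: "0 \<le> lam" "lam < 2"
    and M: "\<forall>S\<in>F. \<exists>c\<in>feasible_set S. norm c \<le> M"
    and B1: "\<forall>S\<in>F. \<forall>(a, b)\<in>S. a \<noteq> 0 \<longrightarrow> \<bar>b\<bar> \<le> B1 * norm a"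
    and u: "norm u = 1"
    and g: "0 < g" "g \<le> 1/4" "\<forall>a\<in>normals F. inner a u \<noteq> 0 \<longrightarrow> 4 * g * norm a \<le> \<bar>inner a u\<bar>"
    and K: "\<And>y z. (relax_step (recession_family u F) lam)\<^sup>*\<^sup>* y z \<Longrightarrow> norm z \<le> norm y + K"
  shows "recession_cone F lam M B1 u g K (orbit_sup (relax_step (recession_family u F) lam))"
proof
  have "\<forall>S\<in>recession_family u F. feasible_set S \<noteq> {}"
    unfolding recession_family_def recession_system_def
    using feasible feasible_set_antimono[of "{(a, b)\<in>S. inner a u = 0}" S for S] by blast
  then have shadow: "relax_step (recession_family u F) lam y y' \<Longrightarrow>
      \<exists>z'. relax_step (recession_family u F) lam x z' \<and> dist y' z' \<le> dist y x" for x y y'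
    using lam by (intro relax_step_shadow) auto
  show "\<forall>S\<in>F. \<forall>(a, b)\<in>S. inner a u \<noteq> 0 \<longrightarrow> 4 * g * norm a \<le> \<bar>inner a u\<bar>"
    using g(3) unfolding normals_def by force
  show "norm y \<le> orbit_sup (relax_step (recession_family u F) lam) y" for y
    using norm_le_orbit_sup[OF K] by blast
  show "orbit_sup (relax_step (recession_family u F) lam) y \<le> norm y + K" for y
    using orbit_sup_le[OF K] by blast
  show "orbit_sup (relax_step (recession_family u F) lam) y
      \<le> orbit_sup (relax_step (recession_family u F) lam) y' + norm (y - y')" for y y'
    using orbit_sup_lipschitz[OF K shadow] by blast
  show "orbit_sup (relax_step (recession_family u F) lam) y'
      \<le> orbit_sup (relax_step (recession_family u F) lam) y"
    if "relax_step (recession_family u F) lam y y'" for y y'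
    using orbit_sup_antimono[OF K] that by blast
qed (use assms in auto)

lemma finite_cone_cover:
  fixes E :: "'a::{real_inner,complete_space} set"
  assumes E: "finite E" "orthonormal E"
    and cones: "\<forall>u\<in>{u \<in> span E. norm u = 1}. recession_cone F lam M B1 u (g u) (Kf u) (Phi u)"
  obtains D K where "finite D" "D \<subseteq> {u \<in> span E. norm u = 1}" "0 \<le> K"
    "\<forall>z\<in>span E. 1 \<le> norm z \<longrightarrow> (\<exists>u\<in>D. in_cone u (recession_cone.\<delta> lam (g u)) z \<and>
      cone_lyapunov u (recession_cone.\<kappa> lam (g u)) (Phi u) z
        \<le> (1 + recession_cone.\<alpha> lam (g u) / 8) * (norm z + K))"
proof -
  define Sph where "Sph = {u \<in> span E. norm u = 1}"
  define \<delta> where "\<delta> u = recession_cone.\<delta> lam (g u)" for u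
  define \<kappa> where "\<kappa> u = recession_cone.\<kappa> lam (g u)" for u
  define \<alpha> where "\<alpha> u = recession_cone.\<alpha> lam (g u)" for u
  have cone: "recession_cone F lam M B1 u (g u) (Kf u) (Phi u)" if "u \<in> Sph" for u
    using cones that unfolding Sph_def by blast
  note cone_constants = recession_cone.cone_constants[OF cone, folded \<delta>_def \<kappa>_def \<alpha>_def]
  obtain D where D: "finite D" "D \<subseteq> Sph" "Sph \<subseteq> (\<Union>u\<in>D. ball u (\<delta> u / 32))"
    using compact_finite_ball_cover[OF compact_sphere_span[OF E, folded Sph_def], of "\<lambda>u. \<delta> u / 32"]
      cone_constants(4) by auto
  define K where "K = (\<Sum>u\<in>D. \<kappa> u * Kf u)"
  have term_nonneg: "0 \<le> \<kappa> u * Kf u" if "u \<in> D" for u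
    using that D(2) cone_constants(1) recession_cone.K_nonneg[OF cone] by (meson less_imp_le mult_nonneg_nonneg subsetD)
  then have "0 \<le> K" unfolding K_def by (rule sum_nonneg)
  have "\<exists>u\<in>D. in_cone u (\<delta> u) z \<and> cone_lyapunov u (\<kappa> u) (Phi u) z \<le> (1 + \<alpha> u / 8) * (norm z + K)"
    if "z \<in> span E" "1 \<le> norm z" for z
  proof -
    have "z \<noteq> 0" using that(2) by auto
    then have "z /\<^sub>R norm z \<in> Sph" unfolding Sph_def using that(1) by (auto intro: span_scale)
    then obtain u where u: "u \<in> D" "norm (z /\<^sub>R norm z - u) < \<delta> u / 32"
      using D(3) by (auto simp: dist_norm norm_minus_commute)
    then have "u \<in> Sph" using D(2) by blast
    have "\<kappa> u * Kf u \<le> K" unfolding K_def using D(1) u(1) term_nonneg by (intro member_le_sum) auto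
    also have "\<dots> \<le> (1 + \<alpha> u / 8) * K"
      using cone_constants(7)[OF \<open>u \<in> Sph\<close>] \<open>0 \<le> K\<close> by (simp add: algebra_simps)
    finally have "\<kappa> u * Kf u \<le> (1 + \<alpha> u / 8) * K" .
    moreover note near = recession_cone.cone_lyapunov_near_direction[OF cone[OF \<open>u \<in> Sph\<close>] \<open>z \<noteq> 0\<close>,
        folded \<delta>_def \<kappa>_def \<alpha>_def, OF u(2)]
    ultimately have "cone_lyapunov u (\<kappa> u) (Phi u) z \<le> (1 + \<alpha> u / 8) * norm z + (1 + \<alpha> u / 8) * K"
      by linarith
    then show ?thesis using u(1) near(1) by (auto simp: distrib_left)
  qed
  then show ?thesis using that[OF D(1)] D(2) \<open>0 \<le> K\<close> unfolding Sph_def \<delta>_def \<kappa>_def \<alpha>_def by blast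
qed

lemma relax_orbit_bounded_by_cones:
  fixes F :: "('a::{real_inner,complete_space} \<times> real) set set"
  assumes E: "finite E" "orthonormal E" "normals F \<subseteq> span E"
    and feasible: "\<forall>S\<in>F. feasible_set S \<noteq> {}" and "lam \<le> 2"
    and M: "\<forall>S\<in>F. \<exists>c\<in>feasible_set S. norm c \<le> M"
    and D: "finite D" "0 \<le> K" and cones: "\<And>u. u \<in> D \<Longrightarrow> recession_cone F lam M B1 u (g u) (Kf u) (Phi u)"
    and cover: "\<forall>z\<in>span E. 1 \<le> norm z \<longrightarrow> (\<exists>u\<in>D. in_cone u (recession_cone.\<delta> lam (g u)) z \<and>
      cone_lyapunov u (recession_cone.\<kappa> lam (g u)) (Phi u) z
        \<le> (1 + recession_cone.\<alpha> lam (g u) / 8) * (norm z + K))"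
  shows "\<exists>C. \<forall>z. (relax_step F lam)\<^sup>*\<^sup>* 0 z \<longrightarrow> norm z \<le> C"
proof -
  \<comment> \<open>thresholds are doubled because norm x \<le> 2 (x \<bullet> u) inside a cone\<close>
  interpret lyapunov_cone_cover "relax_step F lam" "span E" D
    "\<lambda>u. in_cone u (recession_cone.\<delta> lam (g u))"
    "\<lambda>u. cone_lyapunov u (recession_cone.\<kappa> lam (g u)) (Phi u)"
    "\<lambda>u. recession_cone.\<alpha> lam (g u)" "\<lambda>u. 2 * recession_cone.threshold lam M B1 (g u) (Kf u)"
    1 "2 * M" K
  proof
    show "z' \<in> span E" if "z \<in> span E" "relax_step F lam z z'" for z z'
      using relax_step_in_span[OF E feasible that] .
    show "norm z' \<le> 3 * norm z + 2 * M" if "relax_step F lam z z'" for z z'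
      using relax_step_norm_le[OF M \<open>lam \<le> 2\<close> that] .
    show "0 < recession_cone.\<alpha> lam (g u)" "recession_cone.\<alpha> lam (g u) \<le> 1" if "u \<in> D" for u
      using recession_cone.cone_constants(7,8)[OF cones[OF that]] by auto
    show "norm z \<le> 2 * cone_lyapunov u (recession_cone.\<kappa> lam (g u)) (Phi u) z"
      if "u \<in> D" "in_cone u (recession_cone.\<delta> lam (g u)) z" for u z
      using recession_cone.norm_le_cone_lyapunov[OF cones[OF that(1)] that(2)] .
    show "(in_cone u (recession_cone.\<delta> lam (g u)) z' \<and>
        cone_lyapunov u (recession_cone.\<kappa> lam (g u)) (Phi u) z'
          \<le> cone_lyapunov u (recession_cone.\<kappa> lam (g u)) (Phi u) z) \<or>
        norm z' \<le> (1 - recession_cone.\<alpha> lam (g u) / 4) * cone_lyapunov u (recession_cone.\<kappa> lam (g u)) (Phi u) z"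
      if "u \<in> D" "in_cone u (recession_cone.\<delta> lam (g u)) z"
        "2 * recession_cone.threshold lam M B1 (g u) (Kf u) \<le> norm z" "relax_step F lam z z'" for u z z'
      using recession_cone.cone_relax_step[OF cones[OF that(1)] that(2-4)] .
  qed (use D cover span_zero in auto)
  show ?thesis by (rule orbit_bounded)
qed

lemma relax_orbit_from_zero_bounded:
  fixes F :: "('a::{real_inner,complete_space} \<times> real) set set"
  assumes F: "finite F" "\<forall>S\<in>F. finite S \<and> feasible_set S \<noteq> {}" and lam: "0 \<le> lam" "lam < 2"
    and recession_bounded: "\<And>u. u \<in> span (normals F) \<Longrightarrow> norm u = 1 \<Longrightarrow>
      \<exists>K. \<forall>y z. (relax_step (recession_family u F) lam)\<^sup>*\<^sup>* y z \<longrightarrow> norm z \<le> norm y + K"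
  shows "\<exists>C. \<forall>z. (relax_step F lam)\<^sup>*\<^sup>* 0 z \<longrightarrow> norm z \<le> C"
proof -
  have feasible: "\<forall>S\<in>F. feasible_set S \<noteq> {}" using F(2) by blast
  have "finite (normals F)" "finite (\<Union>F)" unfolding normals_def using F by auto
  obtain M where M: "\<forall>S\<in>F. \<exists>c\<in>feasible_set S. norm c \<le> M"
    using finite_sets_meet_common_ball[of "feasible_set ` F"] F by auto
  obtain B1 where B1: "\<forall>S\<in>F. \<forall>(a, b)\<in>S. a \<noteq> 0 \<longrightarrow> \<bar>b\<bar> \<le> B1 * norm a"
    using exists_offset_bound[OF \<open>finite (\<Union>F)\<close>] by blast
  obtain E where E: "finite E" "orthonormal E" "span E = span (normals F)"
    using orthonormal_basis_of_span_exists[OF \<open>finite (normals F)\<close>] by blast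
  obtain g where g: "\<And>u. 0 < g u \<and> g u \<le> 1/4 \<and>
      (\<forall>a\<in>normals F. inner a u \<noteq> 0 \<longrightarrow> 4 * g u * norm a \<le> \<bar>inner a u\<bar>)"
    using exists_angle_bound[OF \<open>finite (normals F)\<close>] by metis
  have "\<forall>u. \<exists>K. u \<in> span E \<and> norm u = 1 \<longrightarrow>
      (\<forall>y z. (relax_step (recession_family u F) lam)\<^sup>*\<^sup>* y z \<longrightarrow> norm z \<le> norm y + K)"
    using recession_bounded unfolding E(3) by blast
  then obtain Kf where Kf: "\<And>u. u \<in> span E \<Longrightarrow> norm u = 1 \<Longrightarrow>
      \<forall>y z. (relax_step (recession_family u F) lam)\<^sup>*\<^sup>* y z \<longrightarrow> norm z \<le> norm y + Kf u"
    by metis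
  define Phi where "Phi u = orbit_sup (relax_step (recession_family u F) lam)" for u
  have cone: "recession_cone F lam M B1 u (g u) (Kf u) (Phi u)" if "u \<in> span E" "norm u = 1" for u
    unfolding Phi_def using g[of u] Kf[OF that]
    by (intro recession_cone_instance[OF feasible lam M B1 that(2)]) auto
  then have "\<forall>u\<in>{u \<in> span E. norm u = 1}. recession_cone F lam M B1 u (g u) (Kf u) (Phi u)"
    by blast
  from finite_cone_cover[OF E(1,2) this] obtain D K where D: "finite D" "D \<subseteq> {u \<in> span E. norm u = 1}"
    "0 \<le> K" "\<forall>z\<in>span E. 1 \<le> norm z \<longrightarrow> (\<exists>u\<in>D. in_cone u (recession_cone.\<delta> lam (g u)) z \<and>
      cone_lyapunov u (recession_cone.\<kappa> lam (g u)) (Phi u) z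
        \<le> (1 + recession_cone.\<alpha> lam (g u) / 8) * (norm z + K))" .
  have "normals F \<subseteq> span E" using E(3) span_superset[of "normals F"] by simp
  moreover have "recession_cone F lam M B1 u (g u) (Kf u) (Phi u)" if "u \<in> D" for u
    using D(2) that by (intro cone) auto
  ultimately show ?thesis
    using lam by (intro relax_orbit_bounded_by_cones[OF E(1,2) _ feasible _ M D(1,3) _ D(4)]) auto
qed

theorem relax_orbits_bounded:
  fixes F :: "('a::{real_inner,complete_space} \<times> real) set set"
  assumes "finite F" "\<forall>S\<in>F. finite S \<and> feasible_set S \<noteq> {}" "0 \<le> lam" "lam < 2"
  shows "\<exists>K. \<forall>x z. (relax_step F lam)\<^sup>*\<^sup>* x z \<longrightarrow> norm z \<le> norm x + K"
  using assms
proof (induction "card (normals F)" arbitrary: F rule: less_induct)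
  case less
  have "finite (normals F)" unfolding normals_def using less.prems(1,2) by auto
  have "\<exists>C. \<forall>z. (relax_step F lam)\<^sup>*\<^sup>* 0 z \<longrightarrow> norm z \<le> C"
  proof (rule relax_orbit_from_zero_bounded[OF less.prems])
    fix u :: 'a assume "u \<in> span (normals F)" "norm u = 1"
    moreover have "u \<noteq> 0" using \<open>norm u = 1\<close> by auto
    ultimately have "card (normals (recession_family u F)) < card (normals F)"
      using card_normals_recession_family_less[OF \<open>finite (normals F)\<close>] by blast
    then show "\<exists>K. \<forall>y z. (relax_step (recession_family u F) lam)\<^sup>*\<^sup>* y z \<longrightarrow> norm z \<le> norm y + K"
      using less.hyps less.prems finite_recession_family recession_family_systems by blast
  qed
  then obtain C where C: "\<And>z. (relax_step F lam)\<^sup>*\<^sup>* 0 z \<Longrightarrow> norm z \<le> C" by blast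
  have "\<forall>S\<in>F. feasible_set S \<noteq> {}" "lam \<le> 2" using less.prems by auto
  from orbit_norm_bound_from_zero[OF relax_step_shadow[OF this] C] show ?case by blast
qed

lemma polyhedral_eq_feasible_set:
  assumes "polyhedral C"
  shows "\<exists>S. finite S \<and> feasible_set S = C"
proof -
  obtain I :: "nat set" and a \<beta> where "finite I" "C = {x. \<forall>i\<in>I. inner (a i) x \<le> \<beta> i}"
    using assms unfolding polyhedral_def by blast
  then have "finite ((\<lambda>i. (a i, \<beta> i)) ` I)" "feasible_set ((\<lambda>i. (a i, \<beta> i)) ` I) = C"
    unfolding feasible_set_def by auto
  then show ?thesis by blast
qed

lemma relaxed_projectors_eq: "relaxed_projectors Cs \<Lambda> = {relax_proj C \<mu> | C \<mu>. C \<in> Cs \<and> \<mu> \<in> \<Lambda>}"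
  unfolding relaxed_projectors_def relax_proj_def by blast

theorem theorem3p2:
  fixes Cs :: "'a::{real_inner,complete_space} set set"
    and lam :: real
    and x :: "nat \<Rightarrow> 'a"
  assumes "finite Cs" and "Cs \<noteq> {}"
    and "\<forall>C\<in>Cs. C \<noteq> {} \<and> polyhedral C"
    and "0 \<le> lam" and "lam < 2"
    and "\<forall>n. \<exists>R\<in>relaxed_projectors Cs {0..lam}. x (Suc n) = R (x n)"
  shows "bounded (range x)"
proof -
  obtain sys where sys: "\<And>C. C \<in> Cs \<Longrightarrow> finite (sys C) \<and> feasible_set (sys C) = C"
    using polyhedral_eq_feasible_set assms(3) by metis
  define F where "F = sys ` Cs"
  have "finite F" "\<forall>S\<in>F. finite S \<and> feasible_set S \<noteq> {}"
    using assms(1,3) sys unfolding F_def by auto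
  then obtain K where K: "\<forall>y z. (relax_step F lam)\<^sup>*\<^sup>* y z \<longrightarrow> norm z \<le> norm y + K"
    using relax_orbits_bounded assms(4,5) by blast
  have "relax_step F lam (x n) (x (Suc n))" for n
  proof -
    obtain C \<mu> where "C \<in> Cs" "\<mu> \<in> {0..lam}" "x (Suc n) = relax_proj (feasible_set (sys C)) \<mu> (x n)"
      using assms(6) sys unfolding relaxed_projectors_eq by fastforce
    then show ?thesis unfolding relax_step_def F_def by blast
  qed
  then have "(relax_step F lam)\<^sup>*\<^sup>* (x 0) (x n)" for n
    by (induction n) (auto intro: rtranclp.rtrancl_into_rtrancl)
  then show ?thesis using K unfolding bounded_iff by blast
qed

end
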